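(* Let $G$ be a digraph, $\mathbf{U}=\mathbf{S}_1\cdots\mathbf{S}_n$ a normalized unit decomposition of $G$ of slice-width $q$ and zig-zag number $z$, $\mathcal{SG}$ a normalized $z$-dilated-saturated slice graph over $\Sigma^{c,q}$, and $\mathcal{N}^q(\mathcal{SG})$ its $q$-numbering expansion. Then the set of sub-unit-decompositions of $\mathbf{U}$ of slice-width at most $c$ whose composition is a digraph isomorphic to some digraph in $\mathcal{L}_{\mathcal{G}}(\mathcal{SG})$ is exactly the regular slice language $\mathcal{L}(\mathcal{SUB}^c(\mathbf{U}))\cap\mathcal{L}(\mathcal{N}^q(\mathcal{SG}))$.
   Context: Slice: finite digraph with vertex set partitioned into in-frontier $I$, center and out-frontier $O$, each frontier vertex incident to exactly one edge, no edge inside a frontier, edge orientations $\pm1$, frontier vertices numbered injectively per frontier with numbers in $\{1,\dots,q\}$; normalized if frontier numbers are $\{1,\dots,|I|\}$ and $\{1,\dots,|O|\}$; width $\max\{|I|,|O|\}$; unit slice: at most one center vertex; permutation slice: no center vertex. Gluing $\circ$ fuses edges at equally numbered out-/in-frontier vertices (number sets and orientations must match). $\Sigma^{c,q}$: unit slices of width $\le c$ with frontier numbers in $\{1,\dots,q\}$. (Dilated) unit decomposition of $H$: word of unit slices, first initial, last final, consecutive gluable, composing to $H$; slice-width = maximal width of its slices. Slice graph: finite directed graph with initial and final vertices labelled by unit slices consistently (initial/final/gluable along edges); $\mathcal{L}(\mathcal{SG})$ = label words of walks from initial to final vertices; $\mathcal{L}_{\mathcal{G}}(\mathcal{SG})$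 = their compositions. Sub-slice: subgraph of a slice that is a slice, with inherited numbering; sub-unit-decomposition of $\mathbf{U}=\mathbf{S}_1\cdots\mathbf{S}_n$: unit decomposition $\mathbf{S}'_1\cdots\mathbf{S}'_n$ of a subgraph of $G$ with $\mathbf{S}'_i$ a sub-slice of $\mathbf{S}_i$. $\mathcal{SUB}^c(\mathbf{U})$: a slice graph whose language is the set of all sub-unit-decompositions of $\mathbf{U}$ of slice-width at most $c$. Zig-zag number: a vertex ordering $(v_1,\dots,v_n)$ of $H$ is $z$-topological if every directed simple path has at most $z$ edges between $\{v_1..v_i\}$ and $\{v_{i+1}..v_n\}$ for each $i$; a dilated unit decomposition is compatible with it if $v_i$ is the center of the $j_i$-th slice with $j_1<\dots<j_n$; it has zig-zag number at most $z$ if compatible with a $z$-topological ordering. A slice graph is $z$-dilated-saturated if all words of its language have zig-zag number at most $z$ and, for every $H\in\mathcal{L}_{\mathcal{G}}(\mathcal{SG})$, every dilated unit decomposition of $H$ compatible with any $z$-topological ordering of $H$ lies in $\mathcal{L}(\mathcal{SG})$. $q$-numbering of a normalized slice: pair of strictly increasing maps $in,out$ from the in-/out-frontier numbers into $\{1,\dots,q\}$; $(\mathbf{S},in,out)$ is the renumbered slice. $\mathcal{N}^q(\mathcal{SG})$: vertices $\mathfrak{v}_{in,out}$ labelled $(\mathbf{S}(\mathfrak{v}),in,out)$ for every vertex $\mathfrak{v}$ and $q$-numbering, edges between $\mathfrak{v}_{in,out}$ and $\mathfrak{v}'_{in',out'}$ iff $(\mathfrak{v},\mathfrak{v}')$ is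 an edge of $\mathcal{SG}$ and the renumbered slices are gluable. *)

theory Defs
  imports Main
begin

record ('v,'e) digraph =
  dV :: "'v set"
  dE :: "'e set"
  dtail :: "'e \<Rightarrow> 'v"
  dhead :: "'e \<Rightarrow> 'v"

definition is_digraph :: "('v,'e) digraph \<Rightarrow> bool" where
  "is_digraph G \<longleftrightarrow> finite (dV G) \<and> finite (dE G) \<and>
     (\<forall>e\<in>dE G. dtail G e \<in> dV G \<and> dhead G e \<in> dV G)"

definition digraph_iso_via ::
  "('v \<Rightarrow> 'w) \<Rightarrow> ('e \<Rightarrow> 'f) \<Rightarrow> ('v,'e) digraph \<Rightarrow> ('w,'f) digraph \<Rightarrow> bool" where
  "digraph_iso_via f g G H \<longleftrightarrow> bij_betw f (dV G) (dV H) \<and> bij_betw g (dE G) (dE H) \<and>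
     (\<forall>e\<in>dE G. dtail H (g e) = f (dtail G e) \<and> dhead H (g e) = f (dhead G e))"

definition digraph_iso :: "('v,'e) digraph \<Rightarrow> ('w,'f) digraph \<Rightarrow> bool" where
  "digraph_iso G H \<longleftrightarrow> (\<exists>f g. digraph_iso_via f g G H)"

text \<open>The orientation
  (+1/-1) of an edge is encoded by its direction (tail/head).\<close>

record ('v,'e) slice =
  sIn :: "'v set"
  sCen :: "'v set"
  sOut :: "'v set"
  sEdges :: "'e set"
  stail :: "'e \<Rightarrow> 'v"
  shead :: "'e \<Rightarrow> 'v"
  snum :: "'v \<Rightarrow> nat"

definition sVerts :: "('v,'e) slice \<Rightarrow> 'v set" where
  "sVerts S = sIn S \<union> sCen S \<union> sOut S"

definition is_slice :: "('v,'e) slice \<Rightarrow> bool" where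
  "is_slice S \<longleftrightarrow>
     finite (sVerts S) \<and> finite (sEdges S) \<and>
     sIn S \<inter> sCen S = {} \<and> sIn S \<inter> sOut S = {} \<and> sCen S \<inter> sOut S = {} \<and>
     (\<forall>e\<in>sEdges S. stail S e \<in> sVerts S \<and> shead S e \<in> sVerts S) \<and>
     (\<forall>v\<in>sIn S \<union> sOut S. card {e\<in>sEdges S. stail S e = v \<or> shead S e = v} = 1) \<and>
     (\<forall>e\<in>sEdges S. \<not> (stail S e \<in> sIn S \<and> shead S e \<in> sIn S) \<and>
                    \<not> (stail S e \<in> sOut S \<and> shead S e \<in> sOut S)) \<and>
     inj_on (snum S) (sIn S) \<and> inj_on (snum S) (sOut S) \<and>
     (\<forall>v\<in>sIn S \<union> sOut S. 1 \<le> snum S v)"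

definition normalized_slice :: "('v,'e) slice \<Rightarrow> bool" where
  "normalized_slice S \<longleftrightarrow> snum S ` sIn S = {1..card (sIn S)} \<and> snum S ` sOut S = {1..card (sOut S)}"

definition slice_width :: "('v,'e) slice \<Rightarrow> nat" where
  "slice_width S = max (card (sIn S)) (card (sOut S))"

definition unit_slice :: "('v,'e) slice \<Rightarrow> bool" where
  "unit_slice S \<longleftrightarrow> is_slice S \<and> card (sCen S) \<le> 1"

definition initial_slice :: "('v,'e) slice \<Rightarrow> bool" where
  "initial_slice S \<longleftrightarrow> sIn S = {}"

definition final_slice :: "('v,'e) slice \<Rightarrow> bool" where
  "final_slice S \<longleftrightarrow> sOut S = {}"

definition gluable :: "('v,'e) slice \<Rightarrow> ('v,'e) slice \<Rightarrow> bool" where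
  "gluable S T \<longleftrightarrow> snum S ` sOut S = snum T ` sIn T \<and>
     (\<forall>x\<in>sOut S. \<forall>y\<in>sIn T. snum S x = snum T y \<longrightarrow>
        ((\<exists>e\<in>sEdges S. shead S e = x) \<longleftrightarrow> (\<exists>e\<in>sEdges T. stail T e = y)))"

definition Sigma :: "nat \<Rightarrow> nat \<Rightarrow> ('v,'e) slice set" where
  "Sigma c q = {S. unit_slice S \<and> slice_width S \<le> c \<and> snum S ` (sIn S \<union> sOut S) \<subseteq> {1..q}}"

text \<open>Slice isomorphism (slices as alphabet symbols are taken up to isomorphism
  preserving the frontier partition, the numbering and the edge directions).\<close>

definition slice_iso :: "('v,'e) slice \<Rightarrow> ('w,'f) slice \<Rightarrow> bool" where
  "slice_iso S T \<longleftrightarrow> (\<exists>f g. bij_betw f (sVerts S) (sVerts T) \<and> bij_betw g (sEdges S) (sEdges T) \<and>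
      f ` sIn S = sIn T \<and> f ` sCen S = sCen T \<and> f ` sOut S = sOut T \<and>
      (\<forall>v\<in>sIn S \<union> sOut S. snum T (f v) = snum S v) \<and>
      (\<forall>e\<in>sEdges S. stail T (g e) = f (stail S e) \<and> shead T (g e) = f (shead S e)))"

definition word_iso :: "('v,'e) slice list \<Rightarrow> ('w,'f) slice list \<Rightarrow> bool" where
  "word_iso W W' \<longleftrightarrow> length W = length W' \<and> (\<forall>i<length W. slice_iso (W!i) (W'!i))"

text \<open>\<open>reach W (i,e) (j,w)\<close>: following the chain of fused edges starting with edge
  \<open>e\<close> of the \<open>i\<close>-th slice (from its tail towards its head) one arrives at center
  vertex \<open>w\<close> of the \<open>j\<close>-th slice.\<close>

inductive reach :: "('v,'e) slice list \<Rightarrow> nat \<times> 'e \<Rightarrow> nat \<times> 'v \<Rightarrow> bool" for W where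
  here: "i < length W \<Longrightarrow> e \<in> sEdges (W!i) \<Longrightarrow> shead (W!i) e \<in> sCen (W!i)
          \<Longrightarrow> reach W (i,e) (i, shead (W!i) e)"
| right: "i < length W \<Longrightarrow> e \<in> sEdges (W!i) \<Longrightarrow> shead (W!i) e \<in> sOut (W!i) \<Longrightarrow>
          Suc i < length W \<Longrightarrow> e' \<in> sEdges (W!Suc i) \<Longrightarrow> stail (W!Suc i) e' \<in> sIn (W!Suc i) \<Longrightarrow>
          snum (W!Suc i) (stail (W!Suc i) e') = snum (W!i) (shead (W!i) e) \<Longrightarrow>
          reach W (Suc i, e') r \<Longrightarrow> reach W (i,e) r"
| left: "i < length W \<Longrightarrow> e \<in> sEdges (W!i) \<Longrightarrow> shead (W!i) e \<in> sIn (W!i) \<Longrightarrow>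
          0 < i \<Longrightarrow> e' \<in> sEdges (W!(i-1)) \<Longrightarrow> stail (W!(i-1)) e' \<in> sOut (W!(i-1)) \<Longrightarrow>
          snum (W!(i-1)) (stail (W!(i-1)) e') = snum (W!i) (shead (W!i) e) \<Longrightarrow>
          reach W (i-1, e') r \<Longrightarrow> reach W (i,e) r"

text \<open>The composed digraph: vertices are the center vertices (tagged by slice index);
  each edge of the composition is identified with its first segment, the slice edge
  leaving its tail.\<close>

definition compose :: "('v,'e) slice list \<Rightarrow> (nat \<times> 'v, nat \<times> 'e) digraph" where
  "compose W = \<lparr> dV = {(i,v). i < length W \<and> v \<in> sCen (W!i)},
                 dE = {(i,e). i < length W \<and> e \<in> sEdges (W!i) \<and> stail (W!i) e \<in> sCen (W!i)},
                 dtail = (\<lambda>(i,e). (i, stail (W!i) e)),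
                 dhead = (\<lambda>p. THE r. reach W p r) \<rparr>"

definition is_unit_decomp :: "('v,'e) slice list \<Rightarrow> bool" where
  "is_unit_decomp W \<longleftrightarrow> W \<noteq> [] \<and> (\<forall>S\<in>set W. unit_slice S) \<and>
     initial_slice (hd W) \<and> final_slice (last W) \<and>
     (\<forall>i. Suc i < length W \<longrightarrow> gluable (W!i) (W!Suc i))"

definition is_unit_decomp_of :: "('v,'e) slice list \<Rightarrow> ('a,'b) digraph \<Rightarrow> bool" where
  "is_unit_decomp_of W G \<longleftrightarrow> is_unit_decomp W \<and> digraph_iso (compose W) G"

definition word_width :: "('v,'e) slice list \<Rightarrow> nat" where
  "word_width W = Max (slice_width ` set W)"

definition normalized_word :: "('v,'e) slice list \<Rightarrow> bool" where
  "normalized_word W \<longleftrightarrow> (\<forall>S\<in>set W. normalized_slice S)"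

definition sub_slice :: "('v,'e) slice \<Rightarrow> ('v,'e) slice \<Rightarrow> bool" where
  "sub_slice S' S \<longleftrightarrow> is_slice S' \<and> sVerts S' \<subseteq> sVerts S \<and>
     sIn S' = sIn S \<inter> sVerts S' \<and> sCen S' = sCen S \<inter> sVerts S' \<and> sOut S' = sOut S \<inter> sVerts S' \<and>
     sEdges S' \<subseteq> sEdges S \<and> stail S' = stail S \<and> shead S' = shead S \<and> snum S' = snum S"

definition sub_unit_decomp :: "('v,'e) slice list \<Rightarrow> ('v,'e) slice list \<Rightarrow> bool" where
  "sub_unit_decomp W' W \<longleftrightarrow> is_unit_decomp W' \<and> length W' = length W \<and>
     (\<forall>i<length W. sub_slice (W'!i) (W!i))"

definition sub_unit_decomps :: "nat \<Rightarrow> ('v,'e) slice list \<Rightarrow> ('v,'e) slice list set" where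
  "sub_unit_decomps c W = {W'. sub_unit_decomp W' W \<and> word_width W' \<le> c}"

definition is_simple_path :: "('v,'e) digraph \<Rightarrow> 'e list \<Rightarrow> bool" where
  "is_simple_path H es \<longleftrightarrow> es \<noteq> [] \<and> set es \<subseteq> dE H \<and>
     (\<forall>j. Suc j < length es \<longrightarrow> dhead H (es!j) = dtail H (es!Suc j)) \<and>
     distinct (dtail H (hd es) # map (dhead H) es)"

definition z_topological :: "nat \<Rightarrow> ('v,'e) digraph \<Rightarrow> 'v list \<Rightarrow> bool" where
  "z_topological z H ord \<longleftrightarrow> distinct ord \<and> set ord = dV H \<and>
     (\<forall>es. is_simple_path H es \<longrightarrow> (\<forall>i.
        length (filter (\<lambda>e. (dtail H e \<in> set (take i ord)) \<noteq> (dhead H e \<in> set (take i ord))) es) \<le> z))"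

definition centers :: "('v,'e) slice list \<Rightarrow> (nat \<times> 'v) list" where
  "centers W = [(i, the_elem (sCen (W!i))). i \<leftarrow> [0..<length W], sCen (W!i) \<noteq> {}]"

text \<open>A (dilated) unit decomposition \<open>W\<close> of \<open>H\<close> is compatible with the ordering \<open>ord\<close>
  of \<open>H\<close> if, under an isomorphism of its composition onto \<open>H\<close>, the \<open>k\<close>-th vertex of
  \<open>ord\<close> is the center of the \<open>j_k\<close>-th slice with \<open>j_1 < j_2 < ...\<close>.\<close>

definition compatible :: "('v,'e) slice list \<Rightarrow> ('a,'b) digraph \<Rightarrow> 'a list \<Rightarrow> bool" where
  "compatible W H ord \<longleftrightarrow> (\<exists>f g. digraph_iso_via f g (compose W) H \<and> map f (centers W) = ord)"

definition zigzag_le :: "nat \<Rightarrow> ('v,'e) slice list \<Rightarrow> bool" where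
  "zigzag_le z W \<longleftrightarrow> (\<exists>ord. z_topological z (compose W) ord \<and> compatible W (compose W) ord)"

record ('n,'v,'e) slice_graph =
  sgV :: "'n set"
  sgE :: "('n \<times> 'n) set"
  sgI :: "'n set"
  sgF :: "'n set"
  sgL :: "'n \<Rightarrow> ('v,'e) slice"

definition is_slice_graph :: "('n,'v,'e) slice_graph \<Rightarrow> bool" where
  "is_slice_graph SG \<longleftrightarrow> finite (sgV SG) \<and> sgE SG \<subseteq> sgV SG \<times> sgV SG \<and>
     sgI SG \<subseteq> sgV SG \<and> sgF SG \<subseteq> sgV SG \<and>
     (\<forall>n\<in>sgV SG. unit_slice (sgL SG n)) \<and>
     (\<forall>n\<in>sgI SG. initial_slice (sgL SG n)) \<and>
     (\<forall>n\<in>sgF SG. final_slice (sgL SG n)) \<and>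
     (\<forall>(n,m)\<in>sgE SG. gluable (sgL SG n) (sgL SG m))"

definition slice_graph_over :: "nat \<Rightarrow> nat \<Rightarrow> ('n,'v,'e) slice_graph \<Rightarrow> bool" where
  "slice_graph_over c q SG \<longleftrightarrow> is_slice_graph SG \<and> (\<forall>n\<in>sgV SG. sgL SG n \<in> Sigma c q)"

definition normalized_slice_graph :: "('n,'v,'e) slice_graph \<Rightarrow> bool" where
  "normalized_slice_graph SG \<longleftrightarrow> (\<forall>n\<in>sgV SG. normalized_slice (sgL SG n))"

definition slang :: "('n,'v,'e) slice_graph \<Rightarrow> ('v,'e) slice list set" where
  "slang SG = {map (sgL SG) ns | ns. ns \<noteq> [] \<and> hd ns \<in> sgI SG \<and> last ns \<in> sgF SG \<and>
       set ns \<subseteq> sgV SG \<and> (\<forall>j. Suc j < length ns \<longrightarrow> (ns!j, ns!Suc j) \<in> sgE SG)}"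

definition graph_lang :: "('n,'v,'e) slice_graph \<Rightarrow> (nat \<times> 'v, nat \<times> 'e) digraph set" where
  "graph_lang SG = compose ` slang SG"

text \<open>Since slices are finite, every slice is isomorphic to one with
  vertices and edges in \<open>nat\<close>, so quantifying over \<open>(nat,nat) slice list\<close> covers
  all decompositions up to isomorphism.\<close>

definition normalized_dilated_saturated :: "nat \<Rightarrow> nat \<Rightarrow> nat \<Rightarrow> ('n,'v,'e) slice_graph \<Rightarrow> bool" where
  "normalized_dilated_saturated z c q SG \<longleftrightarrow>
     slice_graph_over c q SG \<and> normalized_slice_graph SG \<and>
     (\<forall>W\<in>slang SG. zigzag_le z W) \<and>
     (\<forall>H\<in>graph_lang SG. \<forall>ord. z_topological z H ord \<longrightarrow>
        (\<forall>W :: (nat,nat) slice list. is_unit_decomp W \<and> set W \<subseteq> Sigma c q \<and> normalized_word W \<and>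
            compatible W H ord \<longrightarrow> (\<exists>W'\<in>slang SG. word_iso W W')))"

definition qnumberings :: "nat \<Rightarrow> ('v,'e) slice \<Rightarrow> (nat list \<times> nat list) set" where
  "qnumberings q S = {(ins, outs). length ins = card (sIn S) \<and> sorted_wrt (<) ins \<and> set ins \<subseteq> {1..q} \<and>
                                   length outs = card (sOut S) \<and> sorted_wrt (<) outs \<and> set outs \<subseteq> {1..q}}"

definition renumber :: "('v,'e) slice \<Rightarrow> nat list \<Rightarrow> nat list \<Rightarrow> ('v,'e) slice" where
  "renumber S ins outs = S\<lparr> snum := (\<lambda>v. if v \<in> sIn S then ins ! (snum S v - 1)
                                           else if v \<in> sOut S then outs ! (snum S v - 1)
                                           else snum S v) \<rparr>"

definition Nq :: "nat \<Rightarrow> ('n,'v,'e) slice_graph \<Rightarrow> ('n \<times> nat list \<times> nat list,'v,'e) slice_graph" where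
  "Nq q SG = (let V = {(n,ins,outs). n \<in> sgV SG \<and> (ins,outs) \<in> qnumberings q (sgL SG n)};
                  L = (\<lambda>(n,ins,outs). renumber (sgL SG n) ins outs) in
     \<lparr> sgV = V,
       sgE = {(a,b). a \<in> V \<and> b \<in> V \<and> (fst a, fst b) \<in> sgE SG \<and> gluable (L a) (L b)},
       sgI = {a\<in>V. fst a \<in> sgI SG},
       sgF = {a\<in>V. fst a \<in> sgF SG},
       sgL = L \<rparr>)"

end

theory Submission
  imports Defs
begin

text \<open>
  A sub-unit-decomposition \<open>W\<close> of \<open>U\<close> composes to a subgraph of the composition of \<open>U\<close>,
  so the centers of \<open>W\<close>, in slice order, inherit the \<open>z\<close>-topological ordering that the
  zig-zag bound provides for \<open>U\<close>.

  If \<open>W\<close> composes to a digraph isomorphic to some \<open>H\<close> of the graph language of \<open>SG\<close>, copy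
  \<open>W\<close> to a word \<open>W0\<close> over \<open>\<Sigma>^{c,q}\<close> whose frontier numbers are compressed to
  \<open>1, 2, ...\<close>. Transported along the isomorphism, the inherited ordering makes \<open>W0\<close> a
  decomposition of \<open>H\<close> compatible with a \<open>z\<close>-topological ordering, so by saturation \<open>W0\<close> is
  a word of \<open>SG\<close> up to slice isomorphism. Restoring the original frontier numbers of \<open>W\<close>
  is a \<open>q\<close>-numbering of that word, which gives a word of \<open>\<N>^q(SG)\<close> isomorphic to \<open>W\<close>.

  Conversely, a word of \<open>\<N>^q(SG)\<close> slice-isomorphic to \<open>W\<close> is a word \<open>W0\<close> of \<open>SG\<close> with
  renumbered frontiers. Since \<open>q\<close>-numberings are increasing, frontier vertices that \<open>W\<close> glues
  are glued in \<open>W0\<close> as well, so \<open>W\<close> and \<open>W0\<close> compose to isomorphic digraphs.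
\<close>

lemma
  assumes "is_slice S"
  shows slice_finite_verts: "finite (sVerts S)"
    and slice_finite_edges: "finite (sEdges S)"
    and slice_in_cen_disjoint: "sIn S \<inter> sCen S = {}"
    and slice_in_out_disjoint: "sIn S \<inter> sOut S = {}"
    and slice_cen_out_disjoint: "sCen S \<inter> sOut S = {}"
    and slice_tail_in_verts: "e \<in> sEdges S \<Longrightarrow> stail S e \<in> sVerts S"
    and slice_head_in_verts: "e \<in> sEdges S \<Longrightarrow> shead S e \<in> sVerts S"
    and slice_no_in_in_edge: "e \<in> sEdges S \<Longrightarrow> stail S e \<in> sIn S \<Longrightarrow> shead S e \<notin> sIn S"
    and slice_no_out_out_edge: "e \<in> sEdges S \<Longrightarrow> stail S e \<in> sOut S \<Longrightarrow> shead S e \<notin> sOut S"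
    and slice_inj_on_num_in: "inj_on (snum S) (sIn S)"
    and slice_inj_on_num_out: "inj_on (snum S) (sOut S)"
  using assms unfolding is_slice_def by blast+

lemma slice_frontier_edge:
  assumes "is_slice S" "v \<in> sIn S \<union> sOut S"
  obtains e where "{e\<in>sEdges S. stail S e = v \<or> shead S e = v} = {e}"
proof -
  have "card {e\<in>sEdges S. stail S e = v \<or> shead S e = v} = 1"
    using assms unfolding is_slice_def by blast
  then show ?thesis using that card_1_singletonE by blast
qed

lemma slice_frontier_edge_unique:
  assumes "is_slice S" "v \<in> sIn S \<union> sOut S"
    and "e1 \<in> sEdges S" "stail S e1 = v \<or> shead S e1 = v"
    and "e2 \<in> sEdges S" "stail S e2 = v \<or> shead S e2 = v"
  shows "e1 = e2"
proof -
  obtain e where e: "{e\<in>sEdges S. stail S e = v \<or> shead S e = v} = {e}"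
    using slice_frontier_edge[OF assms(1,2)] .
  have "e1 \<in> {e\<in>sEdges S. stail S e = v \<or> shead S e = v}"
    and "e2 \<in> {e\<in>sEdges S. stail S e = v \<or> shead S e = v}"
    using assms(3-6) by simp_all
  then show ?thesis unfolding e by simp
qed

lemma slice_frontier_edge_ex:
  assumes "is_slice S" "v \<in> sIn S \<union> sOut S"
  shows "\<exists>e\<in>sEdges S. stail S e = v \<or> shead S e = v"
proof -
  obtain e where "{e\<in>sEdges S. stail S e = v \<or> shead S e = v} = {e}"
    using slice_frontier_edge[OF assms] .
  then show ?thesis by blast
qed

lemma slice_finite_parts:
  assumes "is_slice S"
  shows "finite (sIn S)" "finite (sCen S)" "finite (sOut S)"
  using slice_finite_verts[OF assms] unfolding sVerts_def by simp_all

lemma slice_head_cases: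
  assumes "is_slice S" "e \<in> sEdges S"
  obtains "shead S e \<in> sIn S" | "shead S e \<in> sCen S" | "shead S e \<in> sOut S"
  using slice_head_in_verts[OF assms] unfolding sVerts_def by blast

lemma gluable_nums: "gluable S T \<Longrightarrow> snum S ` sOut S = snum T ` sIn T"
  unfolding gluable_def by blast

lemma gluable_orientation:
  "gluable S T \<Longrightarrow> x \<in> sOut S \<Longrightarrow> y \<in> sIn T \<Longrightarrow> snum S x = snum T y \<Longrightarrow>
   (\<exists>e\<in>sEdges S. shead S e = x) \<longleftrightarrow> (\<exists>e\<in>sEdges T. stail T e = y)"
  unfolding gluable_def by blast

lemma gluable_continue_right:
  assumes "gluable S T" "e \<in> sEdges S" "shead S e \<in> sOut S"
  obtains e' where "e' \<in> sEdges T" "stail T e' \<in> sIn T" "snum T (stail T e') = snum S (shead S e)"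
proof -
  obtain y where y: "y \<in> sIn T" "snum T y = snum S (shead S e)"
    using gluable_nums[OF assms(1)] assms(3) by (metis imageE imageI)
  then obtain e' where "e' \<in> sEdges T" "stail T e' = y"
    using gluable_orientation[OF assms(1,3) y(1)] assms(2) by metis
  with y that show ?thesis by blast
qed

lemma gluable_continue_left:
  assumes "gluable S T" "is_slice S" "is_slice T" "e \<in> sEdges T" "shead T e \<in> sIn T"
  obtains e' where "e' \<in> sEdges S" "stail S e' \<in> sOut S" "snum S (stail S e') = snum T (shead T e)"
proof -
  let ?y = "shead T e"
  obtain x where x: "x \<in> sOut S" "snum S x = snum T ?y"
    using gluable_nums[OF assms(1)] assms(5) by (metis imageE imageI)
  have "\<not> (\<exists>e2\<in>sEdges T. stail T e2 = ?y)"
  proof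
    assume "\<exists>e2\<in>sEdges T. stail T e2 = ?y"
    then obtain e2 where e2: "e2 \<in> sEdges T" "stail T e2 = ?y" by blast
    then have "e2 = e"
      using slice_frontier_edge_unique[OF assms(3), of ?y] assms(4,5) by blast
    then show False using e2(2) slice_no_in_in_edge[OF assms(3,4)] assms(5) by auto
  qed
  then have "\<not> (\<exists>e2\<in>sEdges S. shead S e2 = x)"
    using gluable_orientation[OF assms(1) x(1) assms(5) x(2)] by blast
  moreover obtain e' where "e' \<in> sEdges S" "stail S e' = x \<or> shead S e' = x"
    using slice_frontier_edge_ex[OF assms(2), of x] x(1) by blast
  ultimately show ?thesis using that x by blast
qed

lemma
  assumes "is_unit_decomp W"
  shows unit_decomp_nonempty: "W \<noteq> []"
    and unit_decomp_slices: "\<forall>S\<in>set W. is_slice S"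
    and unit_decomp_slice: "i < length W \<Longrightarrow> is_slice (W!i)"
    and unit_decomp_unit_slice: "i < length W \<Longrightarrow> unit_slice (W!i)"
    and unit_decomp_first_in: "sIn (W!0) = {}"
    and unit_decomp_last_out: "sOut (W!(length W - 1)) = {}"
    and unit_decomp_gluable: "Suc i < length W \<Longrightarrow> gluable (W!i) (W!Suc i)"
  using assms unfolding is_unit_decomp_def unit_slice_def initial_slice_def final_slice_def
  by (auto simp: hd_conv_nth last_conv_nth)

lemma is_unit_decompI:
  assumes "W \<noteq> []" "\<And>i. i < length W \<Longrightarrow> unit_slice (W!i)"
    and "sIn (W!0) = {}" "sOut (W!(length W - 1)) = {}"
    and "\<And>i. Suc i < length W \<Longrightarrow> gluable (W!i) (W!Suc i)"
  shows "is_unit_decomp W"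
  using assms unfolding is_unit_decomp_def initial_slice_def final_slice_def
  by (auto simp: hd_conv_nth last_conv_nth in_set_conv_nth)

lemma unit_decomp_center:
  assumes "is_unit_decomp W" "i < length W" "sCen (W!i) \<noteq> {}"
  obtains c where "sCen (W!i) = {c}"
proof -
  have "card (sCen (W!i)) = 1"
    using unit_decomp_unit_slice[OF assms(1,2)] slice_finite_parts(2)[OF unit_decomp_slice[OF assms(1,2)]]
      assms(3) unfolding unit_slice_def by (simp add: le_Suc_eq)
  then show ?thesis using that by (auto simp: card_1_singleton_iff)
qed

section \<open>The composition of a unit decomposition\<close>

lemma reach_center: "reach W p r \<Longrightarrow> fst r < length W \<and> snd r \<in> sCen (W ! fst r)"
  by (induction rule: reach.induct) simp_all

lemma reach_unique:
  assumes "\<forall>S\<in>set W. is_slice S" "reach W p r" "reach W p r'"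
  shows "r = r'"
  using assms(2,3)
proof (induction arbitrary: r' rule: reach.induct)
  case (here i e)
  have sl: "is_slice (W!i)" using assms(1) here(1) by simp
  from here.prems show ?case
    by (cases rule: reach.cases)
      (use here.hyps(3) slice_in_cen_disjoint[OF sl] slice_cen_out_disjoint[OF sl] in auto)
next
  case (right i e e' r)
  have sl: "is_slice (W!i)" "is_slice (W!Suc i)" using assms(1) right(1,4) by simp_all
  from right.prems show ?case
  proof (cases rule: reach.cases)
    case (right e2)
    then have "stail (W!Suc i) e2 = stail (W!Suc i) e'"
      using right.hyps(6,7) inj_onD[OF slice_inj_on_num_in[OF sl(2)]] by simp
    then have "e2 = e'"
      using slice_frontier_edge_unique[OF sl(2)] right right.hyps(5,6) by blast
    then show ?thesis using right.IH right by simp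
  qed (use right.hyps(3) slice_cen_out_disjoint[OF sl(1)] slice_in_out_disjoint[OF sl(1)] in auto)
next
  case (left i e e' r)
  have sl: "is_slice (W!i)" "is_slice (W!(i-1))" using assms(1) left(1) by simp_all
  from left.prems show ?case
  proof (cases rule: reach.cases)
    case (left e2)
    then have "stail (W!(i-1)) e2 = stail (W!(i-1)) e'"
      using left.hyps(6,7) inj_onD[OF slice_inj_on_num_out[OF sl(2)]] by simp
    then have "e2 = e'"
      using slice_frontier_edge_unique[OF sl(2)] left left.hyps(5,6) by blast
    then show ?thesis using left.IH left by simp
  qed (use left.hyps(3) slice_in_cen_disjoint[OF sl(1)] slice_in_out_disjoint[OF sl(1)] in auto)
qed

text \<open>A chain of fused edges runs rightwards while it enters out-frontiers and leftwards while
  it enters in-frontiers; it cannot leave the word because the first slice is initial and the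
  last one final.\<close>

lemma reach_exists_rightwards:
  assumes "is_unit_decomp W"
  shows "i < length W \<Longrightarrow> e \<in> sEdges (W!i) \<Longrightarrow> shead (W!i) e \<notin> sIn (W!i) \<Longrightarrow> \<exists>r. reach W (i,e) r"
proof (induction "length W - i" arbitrary: i e rule: less_induct)
  case less
  from unit_decomp_slice[OF assms less.prems(1)] less.prems(2) show ?case
  proof (cases rule: slice_head_cases)
    case 2
    then show ?thesis using reach.here[OF less.prems(1,2)] by blast
  next
    case 3
    have Suci: "Suc i < length W"
      using 3 unit_decomp_last_out[OF assms] less.prems(1) by (metis Suc_lessI diff_Suc_1 empty_iff)
    obtain e' where e': "e' \<in> sEdges (W!Suc i)" "stail (W!Suc i) e' \<in> sIn (W!Suc i)"
      "snum (W!Suc i) (stail (W!Suc i) e') = snum (W!i) (shead (W!i) e)"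
      using gluable_continue_right[OF unit_decomp_gluable[OF assms Suci] less.prems(2) 3] .
    have "shead (W!Suc i) e' \<notin> sIn (W!Suc i)"
      using slice_no_in_in_edge[OF unit_decomp_slice[OF assms Suci] e'(1,2)] .
    then have "\<exists>r. reach W (Suc i, e') r"
      using less.hyps[of "Suc i" e'] less.prems(1) Suci e'(1) by simp
    then show ?thesis using reach.right[OF less.prems(1,2) 3 Suci e'] by blast
  qed (use less.prems(3) in simp)
qed

lemma reach_exists_leftwards:
  assumes "is_unit_decomp W"
  shows "i < length W \<Longrightarrow> e \<in> sEdges (W!i) \<Longrightarrow> shead (W!i) e \<notin> sOut (W!i) \<Longrightarrow> \<exists>r. reach W (i,e) r"
proof (induction i arbitrary: e rule: less_induct)
  case (less i)
  from unit_decomp_slice[OF assms less.prems(1)] less.prems(2) show ?case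
  proof (cases rule: slice_head_cases)
    case 1
    have ipos: "0 < i" using 1 unit_decomp_first_in[OF assms] by (metis empty_iff gr0I)
    have gl: "gluable (W!(i-1)) (W!i)"
      using unit_decomp_gluable[OF assms, of "i-1"] ipos less.prems(1) by simp
    have sl: "is_slice (W!(i-1))" "is_slice (W!i)"
      using unit_decomp_slice[OF assms] less.prems(1) by simp_all
    obtain e' where e': "e' \<in> sEdges (W!(i-1))" "stail (W!(i-1)) e' \<in> sOut (W!(i-1))"
      "snum (W!(i-1)) (stail (W!(i-1)) e') = snum (W!i) (shead (W!i) e)"
      using gluable_continue_left[OF gl sl less.prems(2) 1] .
    have "shead (W!(i-1)) e' \<notin> sOut (W!(i-1))"
      using slice_no_out_out_edge[OF sl(1) e'(1,2)] .
    then have "\<exists>r. reach W (i-1, e') r"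
      using less.IH[of "i-1" e'] less.prems(1) ipos e'(1) by simp
    then show ?thesis using reach.left[OF less.prems(1,2) 1 ipos e'] by blast
  next
    case 2
    then show ?thesis using reach.here[OF less.prems(1,2)] by blast
  qed (use less.prems(3) in simp)
qed

lemma reach_exists:
  assumes "is_unit_decomp W" "i < length W" "e \<in> sEdges (W!i)"
  shows "\<exists>r. reach W (i,e) r"
  using reach_exists_leftwards[OF assms] reach_exists_rightwards[OF assms]
    slice_in_out_disjoint[OF unit_decomp_slice[OF assms(1,2)]] by blast

lemma compose_simps:
  "dV (compose W) = {(i,v). i < length W \<and> v \<in> sCen (W!i)}"
  "dE (compose W) = {(i,e). i < length W \<and> e \<in> sEdges (W!i) \<and> stail (W!i) e \<in> sCen (W!i)}"
  "dtail (compose W) (i,e) = (i, stail (W!i) e)"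
  by (simp_all add: compose_def)

lemma compose_dhead:
  assumes "is_unit_decomp W" "reach W (i,e) r"
  shows "dhead (compose W) (i,e) = r"
proof -
  have "(THE r. reach W (i,e) r) = r"
    using assms(2) reach_unique[OF unit_decomp_slices[OF assms(1)]] by blast
  then show ?thesis by (simp add: compose_def)
qed

lemma compose_edgeE:
  assumes "p \<in> dE (compose W)"
  obtains i e where "p = (i,e)" "i < length W" "e \<in> sEdges (W!i)" "stail (W!i) e \<in> sCen (W!i)"
  using assms by (auto simp: compose_simps)

lemma compose_digraph:
  assumes "is_unit_decomp W"
  shows "is_digraph (compose W)"
proof -
  have fin: "\<forall>i<length W. finite (sCen (W!i)) \<and> finite (sEdges (W!i))"
    using slice_finite_parts(2) slice_finite_edges unit_decomp_slice[OF assms] by blast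
  have "dV (compose W) = (SIGMA i:{..<length W}. sCen (W!i))"
    and "dE (compose W) \<subseteq> (SIGMA i:{..<length W}. sEdges (W!i))"
    unfolding compose_simps by auto
  moreover have "finite (SIGMA i:{..<length W}. sCen (W!i))" "finite (SIGMA i:{..<length W}. sEdges (W!i))"
    using fin by auto
  ultimately have "finite (dV (compose W))" "finite (dE (compose W))"
    by (auto intro: finite_subset)
  moreover have "dtail (compose W) p \<in> dV (compose W) \<and> dhead (compose W) p \<in> dV (compose W)"
    if p: "p \<in> dE (compose W)" for p
  proof -
    obtain i e where ie: "p = (i,e)" "i < length W" "e \<in> sEdges (W!i)" "stail (W!i) e \<in> sCen (W!i)"
      using p by (rule compose_edgeE)
    obtain r where r: "reach W (i,e) r" using reach_exists[OF assms ie(2,3)] by blast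
    have "r \<in> dV (compose W)"
      using reach_center[OF r] by (cases r) (simp add: compose_simps)
    then show ?thesis using ie compose_dhead[OF assms r] by (simp add: compose_simps)
  qed
  ultimately show ?thesis unfolding is_digraph_def by blast
qed

lemma digraph_iso_viaD:
  assumes "digraph_iso_via f g G H"
  shows "bij_betw f (dV G) (dV H)" "bij_betw g (dE G) (dE H)"
    and "e \<in> dE G \<Longrightarrow> dtail H (g e) = f (dtail G e)"
    and "e \<in> dE G \<Longrightarrow> dhead H (g e) = f (dhead G e)"
  using assms unfolding digraph_iso_via_def by blast+

lemma is_digraphD:
  assumes "is_digraph G" "e \<in> dE G"
  shows "dtail G e \<in> dV G" "dhead G e \<in> dV G"
  using assms unfolding is_digraph_def by blast+

lemma digraph_iso_via_inv:
  assumes "is_digraph G" and iso: "digraph_iso_via f g G H"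
  shows "digraph_iso_via (inv_into (dV G) f) (inv_into (dE G) g) H G"
proof -
  note bv = digraph_iso_viaD(1)[OF iso] and be = digraph_iso_viaD(2)[OF iso]
  have "dtail G (inv_into (dE G) g e') = inv_into (dV G) f (dtail H e') \<and>
        dhead G (inv_into (dE G) g e') = inv_into (dV G) f (dhead H e')" if e': "e' \<in> dE H" for e'
  proof -
    define e where "e = inv_into (dE G) g e'"
    have e: "e \<in> dE G" "g e = e'"
      using e' be unfolding e_def bij_betw_def by (auto simp: inv_into_into f_inv_into_f)
    have "inj_on f (dV G)" using bv unfolding bij_betw_def by blast
    then show ?thesis
      using e digraph_iso_viaD(3,4)[OF iso e(1)] is_digraphD[OF assms(1) e(1)]
      unfolding e_def[symmetric] by simp
  qed
  then show ?thesis
    unfolding digraph_iso_via_def using bij_betw_inv_into[OF bv] bij_betw_inv_into[OF be] by blast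
qed

lemma digraph_iso_via_comp:
  assumes "digraph_iso_via f g G H" "digraph_iso_via f' g' H K"
  shows "digraph_iso_via (f' \<circ> f) (g' \<circ> g) G K"
proof -
  have "\<forall>e\<in>dE G. g e \<in> dE H" using digraph_iso_viaD(2)[OF assms(1)] by (meson bij_betw_apply)
  then show ?thesis using assms unfolding digraph_iso_via_def by (auto intro: bij_betw_trans)
qed

lemma digraph_iso_via_is_digraph:
  assumes "is_digraph G" and iso: "digraph_iso_via f g G H"
  shows "is_digraph H"
proof -
  note bv = digraph_iso_viaD(1)[OF iso] and be = digraph_iso_viaD(2)[OF iso]
  have "finite (dV H)" using bv assms(1) unfolding is_digraph_def bij_betw_def by (metis finite_imageI)
  moreover have "finite (dE H)" using be assms(1) unfolding is_digraph_def bij_betw_def by (metis finite_imageI)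
  moreover have "dtail H e' \<in> dV H \<and> dhead H e' \<in> dV H" if e': "e' \<in> dE H" for e'
  proof -
    obtain e where "e \<in> dE G" "e' = g e" using e' be unfolding bij_betw_def by blast
    then show ?thesis
      using digraph_iso_viaD(3,4)[OF iso] is_digraphD[OF assms(1)] bij_betw_apply[OF bv] by simp
  qed
  ultimately show ?thesis unfolding is_digraph_def by blast
qed

lemma simple_path_iso:
  assumes "is_digraph G" and iso: "digraph_iso_via f g G H" and p: "is_simple_path G es"
  shows "is_simple_path H (map g es)"
proof -
  have ne: "es \<noteq> []" and sub: "set es \<subseteq> dE G"
    and chain: "\<forall>j. Suc j < length es \<longrightarrow> dhead G (es!j) = dtail G (es!Suc j)"
    and dist: "distinct (dtail G (hd es) # map (dhead G) es)"
    using p unfolding is_simple_path_def by blast+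
  have hd: "hd es \<in> dE G" using ne sub by auto
  have "set (map g es) \<subseteq> dE H" using sub bij_betw_apply[OF digraph_iso_viaD(2)[OF iso]] by auto
  moreover have "\<forall>j. Suc j < length (map g es) \<longrightarrow> dhead H (map g es!j) = dtail H (map g es!Suc j)"
    using chain sub digraph_iso_viaD(3,4)[OF iso] by (auto simp: subset_code(1))
  moreover have "distinct (dtail H (hd (map g es)) # map (dhead H) (map g es))"
  proof -
    have eq: "dtail H (hd (map g es)) # map (dhead H) (map g es) = map f (dtail G (hd es) # map (dhead G) es)"
      using ne hd sub digraph_iso_viaD(3,4)[OF iso] by (auto simp: hd_map)
    have "set (dtail G (hd es) # map (dhead G) es) \<subseteq> dV G"
      using is_digraphD[OF assms(1)] hd sub by auto
    then have "inj_on f (set (dtail G (hd es) # map (dhead G) es))"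
      using digraph_iso_viaD(1)[OF iso] unfolding bij_betw_def by (meson inj_on_subset)
    then show ?thesis unfolding eq using dist distinct_map by blast
  qed
  moreover have "map g es \<noteq> []" using ne by simp
  ultimately show ?thesis unfolding is_simple_path_def by blast
qed

definition crossings :: "('v,'e) digraph \<Rightarrow> 'v set \<Rightarrow> 'e list \<Rightarrow> nat" where
  "crossings H A es = length (filter (\<lambda>e. (dtail H e \<in> A) \<noteq> (dhead H e \<in> A)) es)"

lemma z_topological_crossings:
  "z_topological z H ord \<longleftrightarrow> distinct ord \<and> set ord = dV H \<and>
     (\<forall>es. is_simple_path H es \<longrightarrow> (\<forall>i. crossings H (set (take i ord)) es \<le> z))"
  unfolding z_topological_def crossings_def ..

lemma crossings_iso:
  assumes "is_digraph G" and iso: "digraph_iso_via f g G H"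
    and "set es \<subseteq> dE G" "A \<subseteq> dV G"
  shows "crossings H (f ` A) (map g es) = crossings G A es"
proof -
  have "inj_on f (dV G)" using digraph_iso_viaD(1)[OF iso] unfolding bij_betw_def by blast
  then have mem: "v \<in> dV G \<Longrightarrow> (f v \<in> f ` A) = (v \<in> A)" for v
    using assms(4) by (simp add: inj_on_image_mem_iff)
  have "(dtail H (g e) \<in> f ` A) = (dtail G e \<in> A)" "(dhead H (g e) \<in> f ` A) = (dhead G e \<in> A)"
    if "e \<in> set es" for e
  proof -
    have e: "e \<in> dE G" using that assms(3) by blast
    show "(dtail H (g e) \<in> f ` A) = (dtail G e \<in> A)" "(dhead H (g e) \<in> f ` A) = (dhead G e \<in> A)"
      using mem[OF is_digraphD(1)[OF assms(1) e]] mem[OF is_digraphD(2)[OF assms(1) e]]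
        digraph_iso_viaD(3,4)[OF iso e] by simp_all
  qed
  then show ?thesis
    unfolding crossings_def filter_map length_map o_def
    by (intro arg_cong[where f=length] filter_cong) auto
qed

lemma crossings_cong:
  assumes "\<And>e. e \<in> set es \<Longrightarrow> dtail H e = dtail G e \<and> dhead H e = dhead G e \<and>
      (dtail G e \<in> B \<longleftrightarrow> dtail G e \<in> A) \<and> (dhead G e \<in> B \<longleftrightarrow> dhead G e \<in> A)"
  shows "crossings H B es = crossings G A es"
  unfolding crossings_def using assms by (intro arg_cong[where f=length] filter_cong) auto

lemma z_topological_iso:
  assumes "is_digraph G" and iso: "digraph_iso_via f g G H" and zt: "z_topological z G ord"
  shows "z_topological z H (map f ord)"
proof -
  have dist: "distinct ord" and set_ord: "set ord = dV G"
    and cross: "\<And>es i. is_simple_path G es \<Longrightarrow> crossings G (set (take i ord)) es \<le> z"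
    using zt unfolding z_topological_crossings by blast+
  note bv = digraph_iso_viaD(1)[OF iso] and be = digraph_iso_viaD(2)[OF iso]
  have "distinct (map f ord)" "set (map f ord) = dV H"
    using dist set_ord bv by (auto simp: bij_betw_def distinct_map)
  moreover have "crossings H (set (take i (map f ord))) es \<le> z"
    if p: "is_simple_path H es" for es i
  proof -
    define es' where "es' = map (inv_into (dE G) g) es"
    have p': "is_simple_path G es'"
      unfolding es'_def
      using simple_path_iso[OF digraph_iso_via_is_digraph[OF assms(1) iso] digraph_iso_via_inv[OF assms(1) iso] p] .
    have "set es \<subseteq> g ` dE G" using p be unfolding is_simple_path_def bij_betw_def by blast
    then have es: "es = map g es'"
      unfolding es'_def by (induction es) (auto simp: f_inv_into_f)
    have "set (take i ord) \<subseteq> dV G" using set_ord set_take_subset by metis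
    then have "crossings H (set (take i (map f ord))) es = crossings G (set (take i ord)) es'"
      unfolding es take_map set_map
      using crossings_iso[OF assms(1) iso] p' unfolding is_simple_path_def by blast
    then show ?thesis using cross[OF p'] by simp
  qed
  ultimately show ?thesis unfolding z_topological_crossings by blast
qed

section \<open>Centers and sub-unit-decompositions\<close>

lemma centers_eq_map_filter:
  "centers W = map (\<lambda>i. (i, the_elem (sCen (W!i)))) (filter (\<lambda>i. sCen (W!i) \<noteq> {}) [0..<length W])"
proof -
  have "concat (map (\<lambda>i. if P i then [f i] else []) xs) = map f (filter P xs)" for P f and xs :: "nat list"
    by (induction xs) auto
  then show ?thesis unfolding centers_def .
qed

lemma set_centers_subset: "is_unit_decomp W \<Longrightarrow> set (centers W) \<subseteq> dV (compose W)"
  unfolding centers_eq_map_filter compose_simps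
  by (auto elim: unit_decomp_center)

lemma zigzag_le_centers:
  assumes "is_unit_decomp U" "zigzag_le z U"
  shows "z_topological z (compose U) (centers U)"
proof -
  obtain ord f g where zt: "z_topological z (compose U) ord"
    and iso: "digraph_iso_via f g (compose U) (compose U)" and ord: "map f (centers U) = ord"
    using assms(2) unfolding zigzag_le_def compatible_def by blast
  note dg = compose_digraph[OF assms(1)]
  have "inj_on f (dV (compose U))" using digraph_iso_viaD(1)[OF iso] unfolding bij_betw_def by blast
  then have "map (inv_into (dV (compose U)) f) ord = centers U"
    unfolding ord[symmetric] map_map using set_centers_subset[OF assms(1)]
    by (intro map_idI) auto
  then show ?thesis using z_topological_iso[OF dg digraph_iso_via_inv[OF dg iso] zt] by simp
qed

lemma sub_sliceD:
  assumes "sub_slice S' S"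
  shows "is_slice S'" "sEdges S' \<subseteq> sEdges S" "stail S' = stail S" "shead S' = shead S" "snum S' = snum S"
    "sIn S' \<subseteq> sIn S" "sCen S' \<subseteq> sCen S" "sOut S' \<subseteq> sOut S"
  using assms unfolding sub_slice_def by blast+

lemma sub_unit_decompD:
  assumes "sub_unit_decomp W U"
  shows "is_unit_decomp W" "length W = length U" "i < length U \<Longrightarrow> sub_slice (W!i) (U!i)"
  using assms unfolding sub_unit_decomp_def by blast+

lemma reach_sub_unit_decomp:
  assumes sub: "sub_unit_decomp W U" and "reach W p r"
  shows "reach U p r"
proof -
  note len = sub_unit_decompD(2)[OF sub]
  note ss = sub_sliceD[OF sub_unit_decompD(3)[OF sub]]
  show ?thesis
    using assms(2)
  proof (induction rule: reach.induct)
    case (here i e)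
    then show ?case using ss[of i] len by (auto intro!: reach.here)
  next
    case (right i e e' r)
    then show ?case using ss[of i] ss[of "Suc i"] len by (intro reach.right[of i U e e' r]) auto
  next
    case (left i e e' r)
    have i1: "i - 1 < length U" using left.hyps(1) len by simp
    with left show ?case using ss[of i] ss[OF i1] len by (intro reach.left[of i U e e' r]) auto
  qed
qed

lemma compose_sub_unit_decomp:
  assumes sub: "sub_unit_decomp W U" and "is_unit_decomp U"
  shows "dV (compose W) \<subseteq> dV (compose U)" "dE (compose W) \<subseteq> dE (compose U)"
    and "p \<in> dE (compose W) \<Longrightarrow> dtail (compose W) p = dtail (compose U) p"
    and "p \<in> dE (compose W) \<Longrightarrow> dhead (compose W) p = dhead (compose U) p"
proof -
  note len = sub_unit_decompD(2)[OF sub]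
  note ss = sub_sliceD[OF sub_unit_decompD(3)[OF sub]]
  note udW = sub_unit_decompD(1)[OF sub]
  show "dV (compose W) \<subseteq> dV (compose U)" "dE (compose W) \<subseteq> dE (compose U)"
    unfolding compose_simps using len ss by fastforce+
  assume "p \<in> dE (compose W)"
  then obtain i e where ie: "p = (i,e)" "i < length W" "e \<in> sEdges (W!i)" "stail (W!i) e \<in> sCen (W!i)"
    by (rule compose_edgeE)
  obtain r where r: "reach W (i,e) r" using reach_exists[OF udW ie(2,3)] by blast
  show "dtail (compose W) p = dtail (compose U) p"
    using ie ss(3)[of i] len by (simp add: compose_simps)
  show "dhead (compose W) p = dhead (compose U) p"
    using ie compose_dhead[OF udW r] compose_dhead[OF assms(2) reach_sub_unit_decomp[OF sub r]] by simp
qed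

lemma simple_path_sub_unit_decomp:
  assumes "sub_unit_decomp W U" "is_unit_decomp U" and p: "is_simple_path (compose W) es"
  shows "is_simple_path (compose U) es"
proof -
  note sc = compose_sub_unit_decomp[OF assms(1,2)]
  have ne: "es \<noteq> []" and s: "set es \<subseteq> dE (compose W)"
    using p unfolding is_simple_path_def by blast+
  have eq: "dtail (compose U) e = dtail (compose W) e" "dhead (compose U) e = dhead (compose W) e"
    if "e \<in> set es" for e
  proof -
    have "e \<in> dE (compose W)" using that s by blast
    then show "dtail (compose U) e = dtail (compose W) e" "dhead (compose U) e = dhead (compose W) e"
      by (simp_all add: sc(3,4))
  qed
  have "dtail (compose U) (hd es) # map (dhead (compose U)) es
      = dtail (compose W) (hd es) # map (dhead (compose W)) es"
    using eq ne by simp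
  then have "distinct (dtail (compose U) (hd es) # map (dhead (compose U)) es)"
    using p unfolding is_simple_path_def by metis
  moreover have "dhead (compose U) (es!j) = dtail (compose U) (es!Suc j)" if j: "Suc j < length es" for j
  proof -
    have "es!j \<in> set es" "es!Suc j \<in> set es" using j by simp_all
    then show ?thesis
      using p j eq unfolding is_simple_path_def by metis
  qed
  ultimately show ?thesis using ne s sc(2) unfolding is_simple_path_def by blast
qed

lemma set_take_filter: "\<exists>j. set (take i (filter P xs)) = set (take j xs) \<inter> {x. P x}"
proof (induction xs arbitrary: i)
  case Nil
  then show ?case by simp
next
  case (Cons a xs)
  show ?case
  proof (cases "P a")
    case True
    show ?thesis
    proof (cases i)
      case (Suc k)
      obtain j where "set (take k (filter P xs)) = set (take j xs) \<inter> {x. P x}" using Cons by blast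
      then show ?thesis using True Suc by (intro exI[of _ "Suc j"]) auto
    qed (intro exI[of _ 0], simp)
  next
    case False
    obtain j where "set (take i (filter P xs)) = set (take j xs) \<inter> {x. P x}" using Cons by blast
    then show ?thesis using False by (intro exI[of _ "Suc j"]) auto
  qed
qed

lemma centers_sub_unit_decomp:
  assumes sub: "sub_unit_decomp W U" and "is_unit_decomp U"
  shows "centers W = filter (\<lambda>x. x \<in> dV (compose W)) (centers U)"
proof -
  note len = sub_unit_decompD(2)[OF sub]
  note ss = sub_sliceD(7)[OF sub_unit_decompD(3)[OF sub]]
  have cen: "sCen (W!i) = {} \<or> (\<exists>c. sCen (W!i) = {c} \<and> sCen (U!i) = {c})" if i: "i < length U" for i
  proof (cases "sCen (U!i) = {}")
    case False
    then obtain c where "sCen (U!i) = {c}" using unit_decomp_center[OF assms(2) i] by blast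
    then show ?thesis using ss[OF i] by (metis subset_singletonD)
  qed (use ss[OF i] in blast)
  have iff: "(sCen (W!i) \<noteq> {}) = (sCen (U!i) \<noteq> {} \<and> (i, the_elem (sCen (U!i))) \<in> dV (compose W))"
    if "i < length U" for i
    using cen[OF that] by (elim disjE exE conjE) (auto simp: compose_simps len that)
  have flt: "filter (\<lambda>i. sCen (W!i) \<noteq> {}) [0..<length W]
      = filter (\<lambda>i. sCen (U!i) \<noteq> {} \<and> (i, the_elem (sCen (U!i))) \<in> dV (compose W)) [0..<length U]"
    unfolding len by (rule filter_cong[OF refl], rule iff) simp
  have pts: "(i, the_elem (sCen (W!i))) = (i, the_elem (sCen (U!i)))"
    if "i < length U" "sCen (W!i) \<noteq> {}" for i
    using cen[OF that(1)] that(2) by auto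
  show ?thesis
    unfolding centers_eq_map_filter filter_map filter_filter o_def flt[symmetric]
    using pts len by (auto intro!: map_cong)
qed

lemma z_topological_sub_unit_decomp:
  assumes sub: "sub_unit_decomp W U" and udU: "is_unit_decomp U"
    and zt: "z_topological z (compose U) (centers U)"
  shows "z_topological z (compose W) (centers W)"
proof -
  note sc = compose_sub_unit_decomp[OF sub udU]
  note dgW = compose_digraph[OF sub_unit_decompD(1)[OF sub]]
  let ?P = "\<lambda>x. x \<in> dV (compose W)"
  have cw: "centers W = filter ?P (centers U)" by (rule centers_sub_unit_decomp[OF sub udU])
  have dist: "distinct (centers U)" and set_U: "set (centers U) = dV (compose U)"
    and cross: "\<And>es i. is_simple_path (compose U) es \<Longrightarrow> crossings (compose U) (set (take i (centers U))) es \<le> z"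
    using zt unfolding z_topological_crossings by blast+
  have "distinct (centers W)" "set (centers W) = dV (compose W)"
    using cw dist set_U sc(1) by auto
  moreover have "crossings (compose W) (set (take i (centers W))) es \<le> z"
    if p: "is_simple_path (compose W) es" for es i
  proof -
    obtain j where j: "set (take i (centers W)) = set (take j (centers U)) \<inter> {x. ?P x}"
      using set_take_filter[of i ?P "centers U"] cw by auto
    have "crossings (compose U) (set (take j (centers U))) es = crossings (compose W) (set (take i (centers W))) es"
    proof (rule crossings_cong)
      fix e assume "e \<in> set es"
      then have e: "e \<in> dE (compose W)" using p unfolding is_simple_path_def by blast
      then show "dtail (compose U) e = dtail (compose W) e \<and> dhead (compose U) e = dhead (compose W) e \<and>
          (dtail (compose W) e \<in> set (take j (centers U)) \<longleftrightarrow> dtail (compose W) e \<in> set (take i (centers W))) \<and>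
          (dhead (compose W) e \<in> set (take j (centers U)) \<longleftrightarrow> dhead (compose W) e \<in> set (take i (centers W)))"
        using sc(3,4) is_digraphD[OF dgW e] unfolding j by simp
    qed
    then show ?thesis using cross[OF simple_path_sub_unit_decomp[OF sub udU p], of j] by simp
  qed
  ultimately show ?thesis unfolding z_topological_crossings by blast
qed

section \<open>Structural isomorphisms of slices and words\<close>

definition slice_struct_iso :: "('v \<Rightarrow> 'w) \<Rightarrow> ('e \<Rightarrow> 'f) \<Rightarrow> ('v,'e) slice \<Rightarrow> ('w,'f) slice \<Rightarrow> bool" where
  "slice_struct_iso f g S T \<longleftrightarrow> bij_betw f (sVerts S) (sVerts T) \<and> bij_betw g (sEdges S) (sEdges T) \<and>
     f ` sIn S = sIn T \<and> f ` sCen S = sCen T \<and> f ` sOut S = sOut T \<and>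
     (\<forall>e\<in>sEdges S. stail T (g e) = f (stail S e) \<and> shead T (g e) = f (shead S e))"

lemma slice_iso_iff_struct_iso:
  "slice_iso S T \<longleftrightarrow> (\<exists>f g. slice_struct_iso f g S T \<and> (\<forall>v\<in>sIn S \<union> sOut S. snum T (f v) = snum S v))"
  unfolding slice_iso_def slice_struct_iso_def
  by (rule iffI; elim exE conjE; intro exI conjI; assumption)

lemma
  assumes "slice_struct_iso f g S T"
  shows slice_struct_iso_bij_verts: "bij_betw f (sVerts S) (sVerts T)"
    and slice_struct_iso_bij_edges: "bij_betw g (sEdges S) (sEdges T)"
    and slice_struct_iso_in: "f ` sIn S = sIn T"
    and slice_struct_iso_cen: "f ` sCen S = sCen T"
    and slice_struct_iso_out: "f ` sOut S = sOut T"
    and slice_struct_iso_tail: "e \<in> sEdges S \<Longrightarrow> stail T (g e) = f (stail S e)"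
    and slice_struct_iso_head: "e \<in> sEdges S \<Longrightarrow> shead T (g e) = f (shead S e)"
  using assms unfolding slice_struct_iso_def by blast+

lemma slice_parts_subset_verts: "sIn S \<subseteq> sVerts S" "sCen S \<subseteq> sVerts S" "sOut S \<subseteq> sVerts S"
  unfolding sVerts_def by blast+

lemma slice_struct_iso_inj: "slice_struct_iso f g S T \<Longrightarrow> inj_on f (sVerts S)"
  using slice_struct_iso_bij_verts unfolding bij_betw_def by blast

lemma slice_struct_iso_mem_iff:
  assumes iso: "slice_struct_iso f g S T" and v: "v \<in> sVerts S"
  shows "f v \<in> sIn T \<longleftrightarrow> v \<in> sIn S" "f v \<in> sCen T \<longleftrightarrow> v \<in> sCen S" "f v \<in> sOut T \<longleftrightarrow> v \<in> sOut S"
  unfolding slice_struct_iso_in[OF iso, symmetric] slice_struct_iso_cen[OF iso, symmetric]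
    slice_struct_iso_out[OF iso, symmetric]
  by (rule inj_on_image_mem_iff[OF slice_struct_iso_inj[OF iso] v slice_parts_subset_verts(1)]
      inj_on_image_mem_iff[OF slice_struct_iso_inj[OF iso] v slice_parts_subset_verts(2)]
      inj_on_image_mem_iff[OF slice_struct_iso_inj[OF iso] v slice_parts_subset_verts(3)])+

lemma slice_struct_iso_edge_image:
  "slice_struct_iso f g S T \<Longrightarrow> sEdges T = g ` sEdges S"
  using slice_struct_iso_bij_edges bij_betw_imp_surj_on by metis

lemma slice_struct_iso_card:
  assumes iso: "slice_struct_iso f g S T"
  shows "card (sIn T) = card (sIn S)" "card (sCen T) = card (sCen S)" "card (sOut T) = card (sOut S)"
  unfolding slice_struct_iso_in[OF iso, symmetric] slice_struct_iso_cen[OF iso, symmetric]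
    slice_struct_iso_out[OF iso, symmetric]
  by (rule card_image inj_on_subset[OF slice_struct_iso_inj[OF iso] slice_parts_subset_verts(1)]
      inj_on_subset[OF slice_struct_iso_inj[OF iso] slice_parts_subset_verts(2)]
      inj_on_subset[OF slice_struct_iso_inj[OF iso] slice_parts_subset_verts(3)])+

lemma slice_struct_iso_width: "slice_struct_iso f g S T \<Longrightarrow> slice_width T = slice_width S"
  unfolding slice_width_def using slice_struct_iso_card(1,3) by metis

lemma slice_struct_iso_comp:
  assumes "slice_struct_iso f g S T" "slice_struct_iso f' g' T U"
  shows "slice_struct_iso (f' \<circ> f) (g' \<circ> g) S U"
proof -
  have "g e \<in> sEdges T" if "e \<in> sEdges S" for e
    using that slice_struct_iso_edge_image[OF assms(1)] by blast
  then have "\<forall>e\<in>sEdges S. stail U ((g' \<circ> g) e) = (f' \<circ> f) (stail S e) \<and> shead U ((g' \<circ> g) e) = (f' \<circ> f) (shead S e)"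
    using slice_struct_iso_tail[OF assms(1)] slice_struct_iso_head[OF assms(1)]
      slice_struct_iso_tail[OF assms(2)] slice_struct_iso_head[OF assms(2)] by simp
  moreover have "(f' \<circ> f) ` sIn S = sIn U" "(f' \<circ> f) ` sCen S = sCen U" "(f' \<circ> f) ` sOut S = sOut U"
    unfolding image_comp[symmetric] slice_struct_iso_in[OF assms(1)] slice_struct_iso_cen[OF assms(1)]
      slice_struct_iso_out[OF assms(1)]
    by (simp_all add: slice_struct_iso_in[OF assms(2)] slice_struct_iso_cen[OF assms(2)]
        slice_struct_iso_out[OF assms(2)])
  moreover have "bij_betw (f' \<circ> f) (sVerts S) (sVerts U)" "bij_betw (g' \<circ> g) (sEdges S) (sEdges U)"
    using bij_betw_trans[OF slice_struct_iso_bij_verts[OF assms(1)] slice_struct_iso_bij_verts[OF assms(2)]]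
      bij_betw_trans[OF slice_struct_iso_bij_edges[OF assms(1)] slice_struct_iso_bij_edges[OF assms(2)]] .
  ultimately show ?thesis unfolding slice_struct_iso_def by (intro conjI)
qed

lemma renumber_simps [simp]:
  "sIn (renumber S a b) = sIn S" "sCen (renumber S a b) = sCen S" "sOut (renumber S a b) = sOut S"
  "sEdges (renumber S a b) = sEdges S" "stail (renumber S a b) = stail S" "shead (renumber S a b) = shead S"
  "sVerts (renumber S a b) = sVerts S"
  unfolding renumber_def sVerts_def by simp_all

lemma slice_struct_iso_renumber [simp]:
  "slice_struct_iso f g S (renumber T a b) \<longleftrightarrow> slice_struct_iso f g S T"
  unfolding slice_struct_iso_def by simp

lemma slice_struct_iso_endpoint_eq:
  assumes iso: "slice_struct_iso f g S T" and "is_slice S" "e \<in> sEdges S" "v \<in> sVerts S"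
  shows "stail T (g e) = f v \<longleftrightarrow> stail S e = v" "shead T (g e) = f v \<longleftrightarrow> shead S e = v"
  unfolding slice_struct_iso_tail[OF iso assms(3)] slice_struct_iso_head[OF iso assms(3)]
  by (simp_all add: inj_on_eq_iff[OF slice_struct_iso_inj[OF iso] _ assms(4)]
      slice_tail_in_verts[OF assms(2,3)] slice_head_in_verts[OF assms(2,3)])

lemma slice_struct_iso_endpoint_ex:
  assumes iso: "slice_struct_iso f g S T" and "is_slice S" "x \<in> sVerts S"
  shows "(\<exists>e'\<in>sEdges T. shead T e' = f x) \<longleftrightarrow> (\<exists>e\<in>sEdges S. shead S e = x)"
    and "(\<exists>e'\<in>sEdges T. stail T e' = f x) \<longleftrightarrow> (\<exists>e\<in>sEdges S. stail S e = x)"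
proof -
  have "(\<exists>e'\<in>g ` sEdges S. P e') \<longleftrightarrow> (\<exists>e\<in>sEdges S. P (g e))" for P by blast
  then show "(\<exists>e'\<in>sEdges T. shead T e' = f x) \<longleftrightarrow> (\<exists>e\<in>sEdges S. shead S e = x)"
    and "(\<exists>e'\<in>sEdges T. stail T e' = f x) \<longleftrightarrow> (\<exists>e\<in>sEdges S. stail S e = x)"
    unfolding slice_struct_iso_edge_image[OF iso]
    using slice_struct_iso_endpoint_eq[OF assms(1,2) _ assms(3)] by simp_all
qed

lemma slice_struct_iso_incident_edges:
  assumes iso: "slice_struct_iso f g S T" and sl: "is_slice S" and v: "v \<in> sVerts S"
  shows "card {e'\<in>sEdges T. stail T e' = f v \<or> shead T e' = f v} = card {e\<in>sEdges S. stail S e = v \<or> shead S e = v}"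
proof -
  have "{e'\<in>sEdges T. stail T e' = f v \<or> shead T e' = f v}
      = g ` {e\<in>sEdges S. stail T (g e) = f v \<or> shead T (g e) = f v}"
    unfolding slice_struct_iso_edge_image[OF iso] by blast
  also have "\<dots> = g ` {e\<in>sEdges S. stail S e = v \<or> shead S e = v}"
    using slice_struct_iso_endpoint_eq[OF iso sl _ v] by (simp cong: conj_cong)
  finally show ?thesis
    using slice_struct_iso_bij_edges[OF iso] unfolding bij_betw_def
    by (simp add: card_image inj_on_subset[of g "sEdges S"])
qed

lemma is_slice_struct_iso:
  assumes sl: "is_slice S" and iso: "slice_struct_iso f g S T"
    and num: "inj_on (snum T) (sIn T)" "inj_on (snum T) (sOut T)" "\<forall>v\<in>sIn T \<union> sOut T. 1 \<le> snum T v"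
  shows "is_slice T"
proof -
  note bv = slice_struct_iso_bij_verts[OF iso] and be = slice_struct_iso_bij_edges[OF iso]
  note mem = slice_struct_iso_mem_iff[OF iso] and edges = slice_struct_iso_edge_image[OF iso]
  note ends = slice_tail_in_verts[OF sl] slice_head_in_verts[OF sl]
  note inj_img = inj_on_image_Int[OF slice_struct_iso_inj[OF iso]] and sub = slice_parts_subset_verts
  have parts: "sIn T = f ` sIn S" "sCen T = f ` sCen S" "sOut T = f ` sOut S"
    using slice_struct_iso_in[OF iso] slice_struct_iso_cen[OF iso] slice_struct_iso_out[OF iso] by simp_all
  have fin: "finite (sVerts T)" "finite (sEdges T)"
    using bij_betw_finite[OF bv] bij_betw_finite[OF be] slice_finite_verts[OF sl] slice_finite_edges[OF sl]
    by simp_all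
  have disj: "sIn T \<inter> sCen T = {}" "sIn T \<inter> sOut T = {}" "sCen T \<inter> sOut T = {}"
    unfolding parts inj_img[OF sub(1,2), symmetric] inj_img[OF sub(1,3), symmetric] inj_img[OF sub(2,3), symmetric]
    by (simp_all add: slice_in_cen_disjoint[OF sl] slice_in_out_disjoint[OF sl] slice_cen_out_disjoint[OF sl])
  have ends_T: "\<forall>e'\<in>sEdges T. stail T e' \<in> sVerts T \<and> shead T e' \<in> sVerts T"
    unfolding edges using slice_struct_iso_tail[OF iso] slice_struct_iso_head[OF iso] ends bij_betw_apply[OF bv]
    by simp
  have card_T: "\<forall>v'\<in>sIn T \<union> sOut T. card {e'\<in>sEdges T. stail T e' = v' \<or> shead T e' = v'} = 1"
  proof
    fix v' assume v': "v' \<in> sIn T \<union> sOut T"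
    obtain v where v: "v \<in> sIn S \<union> sOut S" "v' = f v" using v' unfolding parts by blast
    have "v \<in> sVerts S" using v(1) sub[of S] by blast
    then have "card {e'\<in>sEdges T. stail T e' = v' \<or> shead T e' = v'}
        = card {e\<in>sEdges S. stail S e = v \<or> shead S e = v}"
      unfolding v(2) by (rule slice_struct_iso_incident_edges[OF iso sl])
    also have "\<dots> = 1" using sl v(1) unfolding is_slice_def by blast
    finally show "card {e'\<in>sEdges T. stail T e' = v' \<or> shead T e' = v'} = 1" .
  qed
  have no_loop: "\<forall>e'\<in>sEdges T. \<not> (stail T e' \<in> sIn T \<and> shead T e' \<in> sIn T) \<and>
      \<not> (stail T e' \<in> sOut T \<and> shead T e' \<in> sOut T)"
    unfolding edges using slice_struct_iso_tail[OF iso] slice_struct_iso_head[OF iso] mem ends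
      slice_no_in_in_edge[OF sl] slice_no_out_out_edge[OF sl] by simp
  show ?thesis
    unfolding is_slice_def using fin disj ends_T card_T no_loop num by (intro conjI) simp_all
qed

lemma gluable_struct_iso:
  assumes gl: "gluable S T" and "is_slice S" "is_slice T"
    and a: "slice_struct_iso f g S S'" and b: "slice_struct_iso f' g' T T'"
    and h: "inj_on h (snum S ` sOut S)"
    and num_out: "\<forall>x\<in>sOut S. snum S' (f x) = h (snum S x)"
    and num_in: "\<forall>y\<in>sIn T. snum T' (f' y) = h (snum T y)"
  shows "gluable S' T'"
proof -
  have out: "sOut S' = f ` sOut S" and inn: "sIn T' = f' ` sIn T"
    using slice_struct_iso_out[OF a] slice_struct_iso_in[OF b] by simp_all
  have "snum S' ` sOut S' = h ` snum S ` sOut S" "snum T' ` sIn T' = h ` snum T ` sIn T"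
    unfolding out inn image_image using num_out num_in by (auto intro!: image_cong)
  then have nums: "snum S' ` sOut S' = snum T' ` sIn T'" using gluable_nums[OF gl] by simp
  have orient: "(\<exists>e\<in>sEdges S'. shead S' e = f x) \<longleftrightarrow> (\<exists>e\<in>sEdges T'. stail T' e = f' y)"
    if x: "x \<in> sOut S" and y: "y \<in> sIn T" and eq: "snum S' (f x) = snum T' (f' y)" for x y
  proof -
    have "h (snum S x) = h (snum T y)" using eq num_out num_in x y by simp
    moreover have "snum T y \<in> snum S ` sOut S" using gluable_nums[OF gl] y by blast
    ultimately have "snum S x = snum T y" using inj_onD[OF h] x by blast
    moreover have "x \<in> sVerts S" "y \<in> sVerts T"
      using x y slice_parts_subset_verts[of S] slice_parts_subset_verts[of T] by blast+
    ultimately show ?thesis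
      using gluable_orientation[OF gl x y] slice_struct_iso_endpoint_ex[OF a assms(2)]
        slice_struct_iso_endpoint_ex[OF b assms(3)] by simp
  qed
  have "\<forall>x'\<in>sOut S'. \<forall>y'\<in>sIn T'. snum S' x' = snum T' y' \<longrightarrow>
      ((\<exists>e\<in>sEdges S'. shead S' e = x') \<longleftrightarrow> (\<exists>e\<in>sEdges T'. stail T' e = y'))"
    unfolding out inn
  proof (intro ballI impI)
    fix x' y' assume "x' \<in> f ` sOut S" "y' \<in> f' ` sIn T" and eq: "snum S' x' = snum T' y'"
    then obtain x y where xy: "x \<in> sOut S" "y \<in> sIn T" "x' = f x" "y' = f' y" by blast
    then show "(\<exists>e\<in>sEdges S'. shead S' e = x') \<longleftrightarrow> (\<exists>e\<in>sEdges T'. stail T' e = y')"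
      using orient[OF xy(1,2)] eq by simp
  qed
  with nums show ?thesis unfolding gluable_def by blast
qed

text \<open>Only one direction of the frontier matching is required: frontier vertices fused in \<open>W\<close>
  must be fused in \<open>W'\<close>. Gluability of \<open>W'\<close> then makes the fused partners unique.\<close>

definition word_struct_iso ::
  "(nat \<Rightarrow> 'v \<Rightarrow> 'w) \<Rightarrow> (nat \<Rightarrow> 'e \<Rightarrow> 'f) \<Rightarrow> ('v,'e) slice list \<Rightarrow> ('w,'f) slice list \<Rightarrow> bool" where
  "word_struct_iso F G W W' \<longleftrightarrow> length W' = length W \<and>
     (\<forall>i<length W. slice_struct_iso (F i) (G i) (W!i) (W'!i)) \<and>
     (\<forall>i x y. Suc i < length W \<longrightarrow> x \<in> sOut (W!i) \<longrightarrow> y \<in> sIn (W!Suc i) \<longrightarrow>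
        snum (W!i) x = snum (W!Suc i) y \<longrightarrow> snum (W'!i) (F i x) = snum (W'!Suc i) (F (Suc i) y))"

lemma
  assumes "word_struct_iso F G W W'"
  shows word_struct_iso_length: "length W' = length W"
    and word_struct_iso_slice: "i < length W \<Longrightarrow> slice_struct_iso (F i) (G i) (W!i) (W'!i)"
    and word_struct_iso_match: "Suc i < length W \<Longrightarrow> x \<in> sOut (W!i) \<Longrightarrow> y \<in> sIn (W!Suc i) \<Longrightarrow>
      snum (W!i) x = snum (W!Suc i) y \<Longrightarrow> snum (W'!i) (F i x) = snum (W'!Suc i) (F (Suc i) y)"
  using assms unfolding word_struct_iso_def by blast+

lemma reach_word_struct_iso:
  assumes iso: "word_struct_iso F G W W'" and "reach W p r"
  shows "reach W' (fst p, G (fst p) (snd p)) (fst r, F (fst r) (snd r))"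
  using assms(2)
proof (induction rule: reach.induct)
  case (here i e)
  note s = word_struct_iso_slice[OF iso here(1)]
  show ?case
    using reach.here[of i W' "G i e"] here word_struct_iso_length[OF iso]
      slice_struct_iso_edge_image[OF s] slice_struct_iso_head[OF s] slice_struct_iso_cen[OF s] by auto
next
  case (right i e e' r)
  note s = word_struct_iso_slice[OF iso right(1)] and s' = word_struct_iso_slice[OF iso right(4)]
  have "F i (shead (W!i) e) \<in> sOut (W'!i)" "F (Suc i) (stail (W!Suc i) e') \<in> sIn (W'!Suc i)"
    using slice_struct_iso_out[OF s] slice_struct_iso_in[OF s'] right(3,6) by blast+
  then show ?case
    using reach.right[of i W' "G i e" "G (Suc i) e'"] right word_struct_iso_length[OF iso]
      word_struct_iso_match[OF iso right(4), of "shead (W!i) e" "stail (W!Suc i) e'"]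
      slice_struct_iso_edge_image[OF s] slice_struct_iso_head[OF s] slice_struct_iso_out[OF s]
      slice_struct_iso_edge_image[OF s'] slice_struct_iso_tail[OF s'] slice_struct_iso_in[OF s']
    by auto
next
  case (left i e e' r)
  have i': "i - 1 < length W" "Suc (i - 1) < length W" using left(1,4) by simp_all
  note s = word_struct_iso_slice[OF iso left(1)] and s' = word_struct_iso_slice[OF iso i'(1)]
  have "F i (shead (W!i) e) \<in> sIn (W'!i)" "F (i-1) (stail (W!(i-1)) e') \<in> sOut (W'!(i-1))"
    using slice_struct_iso_in[OF s] slice_struct_iso_out[OF s'] left(3,6) by blast+
  then show ?case
    using reach.left[of i W' "G i e" "G (i-1) e'"] left word_struct_iso_length[OF iso]
      word_struct_iso_match[OF iso i'(2), of "stail (W!(i-1)) e'" "shead (W!i) e"]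
      slice_struct_iso_edge_image[OF s] slice_struct_iso_head[OF s] slice_struct_iso_in[OF s]
      slice_struct_iso_edge_image[OF s'] slice_struct_iso_tail[OF s'] slice_struct_iso_out[OF s']
    by auto
qed

lemma bij_betw_indexed:
  assumes "\<And>i. i < n \<Longrightarrow> bij_betw (F i) (A i) (B i)"
  shows "bij_betw (\<lambda>(i,v). (i, F i v)) {(i,v). i < n \<and> v \<in> A i} {(i,v). i < n \<and> v \<in> B i}"
proof -
  have "inj_on (\<lambda>(i,v). (i, F i v)) {(i,v). i < n \<and> v \<in> A i}"
    using assms unfolding bij_betw_def inj_on_def by auto
  moreover have "(\<lambda>(i,v). (i, F i v)) ` {(i,v). i < n \<and> v \<in> A i} = {(i,v). i < n \<and> v \<in> B i}"
  proof
    show "(\<lambda>(i,v). (i, F i v)) ` {(i,v). i < n \<and> v \<in> A i} \<subseteq> {(i,v). i < n \<and> v \<in> B i}"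
      using assms bij_betw_apply by fastforce
    show "{(i,v). i < n \<and> v \<in> B i} \<subseteq> (\<lambda>(i,v). (i, F i v)) ` {(i,v). i < n \<and> v \<in> A i}"
    proof
      fix x assume "x \<in> {(i,v). i < n \<and> v \<in> B i}"
      then obtain i b where x: "x = (i,b)" "i < n" "b \<in> B i" by blast
      then obtain a where "a \<in> A i" "b = F i a" using assms unfolding bij_betw_def by blast
      then show "x \<in> (\<lambda>(i,v). (i, F i v)) ` {(i,v). i < n \<and> v \<in> A i}" using x by force
    qed
  qed
  ultimately show ?thesis unfolding bij_betw_def by blast
qed

lemma slice_struct_iso_center_edges:
  assumes iso: "slice_struct_iso f g S T" and sl: "is_slice S"
  shows "bij_betw g {e\<in>sEdges S. stail S e \<in> sCen S} {e\<in>sEdges T. stail T e \<in> sCen T}"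
proof (rule bij_betw_subset[OF slice_struct_iso_bij_edges[OF iso]])
  have "stail T (g e) \<in> sCen T \<longleftrightarrow> stail S e \<in> sCen S" if "e \<in> sEdges S" for e
    using that slice_struct_iso_tail[OF iso] slice_struct_iso_mem_iff(2)[OF iso slice_tail_in_verts[OF sl that]]
    by simp
  then show "g ` {e\<in>sEdges S. stail S e \<in> sCen S} = {e\<in>sEdges T. stail T e \<in> sCen T}"
    unfolding slice_struct_iso_edge_image[OF iso] by blast
qed blast

lemma compose_word_struct_iso:
  assumes ud: "is_unit_decomp W" and ud': "is_unit_decomp W'" and iso: "word_struct_iso F G W W'"
  shows "digraph_iso_via (\<lambda>(i,v). (i, F i v)) (\<lambda>(i,e). (i, G i e)) (compose W) (compose W')"
    and "map (\<lambda>(i,v). (i, F i v)) (centers W) = centers W'"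
proof -
  note len = word_struct_iso_length[OF iso] and s = word_struct_iso_slice[OF iso]
  have "bij_betw (\<lambda>(i,v). (i, F i v)) (dV (compose W)) (dV (compose W'))"
    unfolding compose_simps len
    using bij_betw_indexed[of "length W" F "\<lambda>i. sCen (W!i)" "\<lambda>i. sCen (W'!i)"]
      bij_betw_subset[OF slice_struct_iso_bij_verts[OF s] slice_parts_subset_verts(2)] slice_struct_iso_cen[OF s]
    by simp
  moreover have "bij_betw (\<lambda>(i,e). (i, G i e)) (dE (compose W)) (dE (compose W'))"
    using bij_betw_indexed[of "length W" G "\<lambda>i. {e\<in>sEdges (W!i). stail (W!i) e \<in> sCen (W!i)}"
        "\<lambda>i. {e\<in>sEdges (W'!i). stail (W'!i) e \<in> sCen (W'!i)}"]
      slice_struct_iso_center_edges[OF s unit_decomp_slice[OF ud]]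
    unfolding compose_simps len by simp
  moreover have "dtail (compose W') ((\<lambda>(i,e). (i, G i e)) p) = (\<lambda>(i,v). (i, F i v)) (dtail (compose W) p) \<and>
      dhead (compose W') ((\<lambda>(i,e). (i, G i e)) p) = (\<lambda>(i,v). (i, F i v)) (dhead (compose W) p)"
    if p: "p \<in> dE (compose W)" for p
  proof -
    obtain i e where ie: "p = (i,e)" "i < length W" "e \<in> sEdges (W!i)" "stail (W!i) e \<in> sCen (W!i)"
      using p by (rule compose_edgeE)
    obtain r where r: "reach W (i,e) r" using reach_exists[OF ud ie(2,3)] by blast
    have "dhead (compose W') (i, G i e) = (fst r, F (fst r) (snd r))"
      using compose_dhead[OF ud' reach_word_struct_iso[OF iso r]] by simp
    then show ?thesis
      using ie compose_dhead[OF ud r] slice_struct_iso_tail[OF s[OF ie(2)] ie(3)]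
      by (cases r) (simp add: compose_simps)
  qed
  ultimately show "digraph_iso_via (\<lambda>(i,v). (i, F i v)) (\<lambda>(i,e). (i, G i e)) (compose W) (compose W')"
    unfolding digraph_iso_via_def by blast
  have "filter (\<lambda>i. sCen (W'!i) \<noteq> {}) [0..<length W'] = filter (\<lambda>i. sCen (W!i) \<noteq> {}) [0..<length W]"
    unfolding len using slice_struct_iso_cen[OF s, symmetric] by (intro filter_cong) simp_all
  moreover have "(i, F i (the_elem (sCen (W!i)))) = (i, the_elem (sCen (W'!i)))"
    if i: "i < length W" "sCen (W!i) \<noteq> {}" for i
  proof -
    obtain c where "sCen (W!i) = {c}" using unit_decomp_center[OF ud i] .
    then show ?thesis using slice_struct_iso_cen[OF s[OF i(1)], symmetric] by simp
  qed
  ultimately show "map (\<lambda>(i,v). (i, F i v)) (centers W) = centers W'"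
    unfolding centers_eq_map_filter by auto
qed

section \<open>Normalized copies\<close>

text \<open>\<open>rank A n\<close> is the position of \<open>n\<close> in the increasing enumeration of \<open>A\<close>, counted from 0.\<close>

definition rank :: "nat set \<Rightarrow> nat \<Rightarrow> nat" where
  "rank A = the_inv_into {..<card A} ((!) (sorted_list_of_set A))"

lemma bij_betw_nth_sorted_list_of_set:
  "finite A \<Longrightarrow> bij_betw ((!) (sorted_list_of_set A)) {..<card A} A"
  by (rule bij_betw_nth) (simp_all add: distinct_sorted_list_of_set)

lemma
  assumes "finite A"
  shows bij_betw_rank: "bij_betw (rank A) A {..<card A}"
    and sorted_list_of_set_nth_rank: "n \<in> A \<Longrightarrow> sorted_list_of_set A ! rank A n = n"
  using bij_betw_the_inv_into[OF bij_betw_nth_sorted_list_of_set[OF assms]]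
    f_the_inv_into_f_bij_betw[OF bij_betw_nth_sorted_list_of_set[OF assms]]
  unfolding rank_def by blast+

lemma image_Suc_rank:
  assumes "finite A"
  shows "(\<lambda>n. rank A n + 1) ` A = {1..card A}"
proof -
  have "(\<lambda>n. rank A n + 1) ` A = Suc ` rank A ` A" by (simp add: image_image)
  also have "\<dots> = {1..card A}"
    using bij_betw_rank[OF assms] unfolding bij_betw_def by (simp add: lessThan_atLeast0 atLeastLessThanSuc_atLeastAtMost[symmetric])
  finally show ?thesis .
qed

definition normal_num :: "('v,'e) slice \<Rightarrow> 'v \<Rightarrow> nat" where
  "normal_num S v = (if v \<in> sIn S then rank (snum S ` sIn S) (snum S v) + 1
                     else if v \<in> sOut S then rank (snum S ` sOut S) (snum S v) + 1 else 0)"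

lemma normal_num_in: "v \<in> sIn S \<Longrightarrow> normal_num S v = rank (snum S ` sIn S) (snum S v) + 1"
  unfolding normal_num_def by simp

lemma normal_num_out:
  "is_slice S \<Longrightarrow> v \<in> sOut S \<Longrightarrow> normal_num S v = rank (snum S ` sOut S) (snum S v) + 1"
  unfolding normal_num_def using slice_in_out_disjoint by fastforce

lemma sorted_list_of_set_nth_normal_num:
  assumes "is_slice S"
  shows "v \<in> sIn S \<Longrightarrow> sorted_list_of_set (snum S ` sIn S) ! (normal_num S v - 1) = snum S v"
    and "v \<in> sOut S \<Longrightarrow> sorted_list_of_set (snum S ` sOut S) ! (normal_num S v - 1) = snum S v"
proof -
  note fin = finite_imageI[OF slice_finite_parts(1)[OF assms]] finite_imageI[OF slice_finite_parts(3)[OF assms]]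
  show "v \<in> sIn S \<Longrightarrow> sorted_list_of_set (snum S ` sIn S) ! (normal_num S v - 1) = snum S v"
    using normal_num_in[of v S] sorted_list_of_set_nth_rank[OF fin(1) imageI] by simp
  show "v \<in> sOut S \<Longrightarrow> sorted_list_of_set (snum S ` sOut S) ! (normal_num S v - 1) = snum S v"
    using normal_num_out[OF assms, of v] sorted_list_of_set_nth_rank[OF fin(2) imageI] by simp
qed

definition normal_copy :: "('v \<Rightarrow> 'w) \<Rightarrow> ('e \<Rightarrow> 'f) \<Rightarrow> ('v,'e) slice \<Rightarrow> ('w,'f) slice" where
  "normal_copy fv fe S = \<lparr> sIn = fv ` sIn S, sCen = fv ` sCen S, sOut = fv ` sOut S, sEdges = fe ` sEdges S,
     stail = (\<lambda>e'. fv (stail S (inv_into (sEdges S) fe e'))),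
     shead = (\<lambda>e'. fv (shead S (inv_into (sEdges S) fe e'))),
     snum = (\<lambda>v'. normal_num S (inv_into (sVerts S) fv v')) \<rparr>"

context
  fixes S :: "('v,'e) slice" and fv :: "'v \<Rightarrow> 'w" and fe :: "'e \<Rightarrow> 'f"
  assumes sl: "is_slice S" and inj_v: "inj_on fv (sVerts S)" and inj_e: "inj_on fe (sEdges S)"
begin

lemma normal_copy_struct_iso: "slice_struct_iso fv fe S (normal_copy fv fe S)"
proof -
  have "sVerts (normal_copy fv fe S) = fv ` sVerts S"
    unfolding normal_copy_def sVerts_def by (simp add: image_Un)
  then show ?thesis
    unfolding slice_struct_iso_def using inj_on_imp_bij_betw[OF inj_v] inj_on_imp_bij_betw[OF inj_e] inj_e
    by (simp add: normal_copy_def)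
qed

lemma normal_copy_num: "v \<in> sVerts S \<Longrightarrow> snum (normal_copy fv fe S) (fv v) = normal_num S v"
  unfolding normal_copy_def using inj_v by simp

lemma normal_copy_frontier_nums:
  "snum (normal_copy fv fe S) ` sIn (normal_copy fv fe S) = {1..card (sIn (normal_copy fv fe S))}"
  "snum (normal_copy fv fe S) ` sOut (normal_copy fv fe S) = {1..card (sOut (normal_copy fv fe S))}"
proof -
  note iso = normal_copy_struct_iso and fin = slice_finite_parts[OF sl]
  have "snum (normal_copy fv fe S) ` sIn (normal_copy fv fe S) = (\<lambda>n. rank (snum S ` sIn S) n + 1) ` snum S ` sIn S"
    unfolding slice_struct_iso_in[OF iso, symmetric] image_image
    using normal_copy_num[OF subsetD[OF slice_parts_subset_verts(1)]] normal_num_in by (auto intro!: image_cong)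
  also have "\<dots> = {1..card (sIn S)}"
    using image_Suc_rank fin card_image[OF slice_inj_on_num_in[OF sl]] by simp
  finally show "snum (normal_copy fv fe S) ` sIn (normal_copy fv fe S) = {1..card (sIn (normal_copy fv fe S))}"
    using slice_struct_iso_card[OF iso] by simp
  have "snum (normal_copy fv fe S) ` sOut (normal_copy fv fe S) = (\<lambda>n. rank (snum S ` sOut S) n + 1) ` snum S ` sOut S"
    unfolding slice_struct_iso_out[OF iso, symmetric] image_image
    using normal_copy_num[OF subsetD[OF slice_parts_subset_verts(3)]] normal_num_out[OF sl]
    by (auto intro!: image_cong)
  also have "\<dots> = {1..card (sOut S)}"
    using image_Suc_rank fin card_image[OF slice_inj_on_num_out[OF sl]] by simp
  finally show "snum (normal_copy fv fe S) ` sOut (normal_copy fv fe S) = {1..card (sOut (normal_copy fv fe S))}"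
    using slice_struct_iso_card[OF iso] by simp
qed

lemma normal_copy_normalized: "normalized_slice (normal_copy fv fe S)"
  unfolding normalized_slice_def using normal_copy_frontier_nums by blast

lemma normal_copy_slice: "is_slice (normal_copy fv fe S)"
proof (rule is_slice_struct_iso[OF sl normal_copy_struct_iso])
  note iso = normal_copy_struct_iso
  have fin: "finite (sIn (normal_copy fv fe S))" "finite (sOut (normal_copy fv fe S))"
    using slice_finite_parts[OF sl] slice_struct_iso_in[OF iso] slice_struct_iso_out[OF iso]
    by (metis finite_imageI)+
  show "inj_on (snum (normal_copy fv fe S)) (sIn (normal_copy fv fe S))"
    "inj_on (snum (normal_copy fv fe S)) (sOut (normal_copy fv fe S))"
    using normal_copy_frontier_nums fin slice_struct_iso_card[OF iso]
    by (simp_all add: eq_card_imp_inj_on)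
  show "\<forall>v\<in>sIn (normal_copy fv fe S) \<union> sOut (normal_copy fv fe S). 1 \<le> snum (normal_copy fv fe S) v"
    using normal_copy_frontier_nums by fastforce
qed

end

lemma normal_num_glued:
  assumes "gluable S T" "is_slice S" "x \<in> sOut S" "y \<in> sIn T" "snum S x = snum T y"
  shows "normal_num S x = normal_num T y"
  using normal_num_out[OF assms(2,3)] normal_num_in[OF assms(4)] gluable_nums[OF assms(1)] assms(5) by simp

lemma gluable_normal_copy:
  assumes gl: "gluable S T" and sl: "is_slice S" "is_slice T"
    and iso: "slice_struct_iso f g S S'" "slice_struct_iso f' g' T T'"
    and num: "\<And>x. x \<in> sOut S \<Longrightarrow> snum S' (f x) = normal_num S x"
      "\<And>y. y \<in> sIn T \<Longrightarrow> snum T' (f' y) = normal_num T y"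
  shows "gluable S' T'"
proof (rule gluable_struct_iso[OF gl sl iso])
  let ?A = "snum S ` sOut S"
  have "inj_on (rank ?A) ?A"
    using bij_betw_rank[OF finite_imageI[OF slice_finite_parts(3)[OF sl(1)]]] unfolding bij_betw_def by blast
  then show "inj_on (\<lambda>n. rank ?A n + 1) ?A" unfolding inj_on_def by simp
  show "\<forall>x\<in>sOut S. snum S' (f x) = rank ?A (snum S x) + 1"
    using num(1) normal_num_out[OF sl(1)] by simp
  show "\<forall>y\<in>sIn T. snum T' (f' y) = rank ?A (snum T y) + 1"
    unfolding gluable_nums[OF gl] using num(2) normal_num_in by metis
qed

lemma unit_decomp_struct_iso:
  assumes ud: "is_unit_decomp W" and len: "length W' = length W"
    and iso: "\<And>i. i < length W \<Longrightarrow> slice_struct_iso (F i) (G i) (W!i) (W'!i)"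
    and sl: "\<And>i. i < length W \<Longrightarrow> is_slice (W'!i)"
    and gl: "\<And>i. Suc i < length W \<Longrightarrow> gluable (W'!i) (W'!Suc i)"
  shows "is_unit_decomp W'"
proof (rule is_unit_decompI)
  show "W' \<noteq> []" using unit_decomp_nonempty[OF ud] len by auto
  show "unit_slice (W'!i)" if "i < length W'" for i
    using that sl unit_decomp_unit_slice[OF ud] slice_struct_iso_card(2)[OF iso] len
    unfolding unit_slice_def by simp
  have "0 < length W" using unit_decomp_nonempty[OF ud] by simp
  then show "sIn (W'!0) = {}" "sOut (W'!(length W' - 1)) = {}"
    using unit_decomp_first_in[OF ud] unit_decomp_last_out[OF ud]
      slice_struct_iso_in[OF iso] slice_struct_iso_out[OF iso] len by (metis diff_less image_empty zero_less_one)+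
  show "gluable (W'!i) (W'!Suc i)" if "Suc i < length W'" for i
    using gl that len by simp
qed

lemma normal_copy_unit_decomp:
  fixes W :: "('v,'e) slice list"
  assumes ud: "is_unit_decomp W"
  obtains W' :: "(nat,nat) slice list" and F G
  where "is_unit_decomp W'" "normalized_word W'" "word_struct_iso F G W W'"
    and "\<And>i v. i < length W \<Longrightarrow> v \<in> sVerts (W!i) \<Longrightarrow> snum (W'!i) (F i v) = normal_num (W!i) v"
proof -
  note sl = unit_decomp_slice[OF ud]
  have "\<forall>i. \<exists>f :: 'v \<Rightarrow> nat. i < length W \<longrightarrow> inj_on f (sVerts (W!i))"
    "\<forall>i. \<exists>f :: 'e \<Rightarrow> nat. i < length W \<longrightarrow> inj_on f (sEdges (W!i))"
    using finite_imp_inj_to_nat_seg slice_finite_verts[OF sl] slice_finite_edges[OF sl] by metis+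
  then obtain FV FE where FV: "\<And>i. i < length W \<Longrightarrow> inj_on (FV i :: 'v \<Rightarrow> nat) (sVerts (W!i))"
    and FE: "\<And>i. i < length W \<Longrightarrow> inj_on (FE i :: 'e \<Rightarrow> nat) (sEdges (W!i))"
    by metis
  define W' where "W' = map (\<lambda>i. normal_copy (FV i) (FE i) (W!i)) [0..<length W]"
  have len: "length W' = length W" and W'i: "\<And>i. i < length W \<Longrightarrow> W'!i = normal_copy (FV i) (FE i) (W!i)"
    unfolding W'_def by simp_all
  have iso: "slice_struct_iso (FV i) (FE i) (W!i) (W'!i)"
    and num: "\<And>v. v \<in> sVerts (W!i) \<Longrightarrow> snum (W'!i) (FV i v) = normal_num (W!i) v"
    and normal: "normalized_slice (W'!i)"
    and slice: "is_slice (W'!i)" if i: "i < length W" for i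
    unfolding W'i[OF i]
    using normal_copy_struct_iso[OF sl[OF i] FV[OF i] FE[OF i]] normal_copy_num[OF sl[OF i] FV[OF i] FE[OF i]]
      normal_copy_normalized[OF sl[OF i] FV[OF i] FE[OF i]] normal_copy_slice[OF sl[OF i] FV[OF i] FE[OF i]]
    by simp_all
  have num_out: "snum (W'!i) (FV i x) = normal_num (W!i) x" if "i < length W" "x \<in> sOut (W!i)" for i x
    using num[OF that(1) subsetD[OF slice_parts_subset_verts(3) that(2)]] .
  have num_in: "snum (W'!i) (FV i y) = normal_num (W!i) y" if "i < length W" "y \<in> sIn (W!i)" for i y
    using num[OF that(1) subsetD[OF slice_parts_subset_verts(1) that(2)]] .
  have match: "snum (W'!i) (FV i x) = snum (W'!Suc i) (FV (Suc i) y)"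
    if i: "Suc i < length W" and "x \<in> sOut (W!i)" "y \<in> sIn (W!Suc i)" "snum (W!i) x = snum (W!Suc i) y"
    for i x y
    using num_out[OF Suc_lessD[OF i] that(2)] num_in[OF i that(3)]
      normal_num_glued[OF unit_decomp_gluable[OF ud i] sl[OF Suc_lessD[OF i]] that(2-4)] by simp
  have "is_unit_decomp W'"
  proof (rule unit_decomp_struct_iso[OF ud len iso slice])
    fix i assume i: "Suc i < length W"
    show "gluable (W'!i) (W'!Suc i)"
      using gluable_normal_copy[OF unit_decomp_gluable[OF ud i] sl sl iso iso num_out num_in] i by simp
  qed
  moreover have "normalized_word W'"
    using normal len unfolding normalized_word_def by (metis in_set_conv_nth)
  moreover have "word_struct_iso FV FE W W'"
    unfolding word_struct_iso_def using len iso match by blast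
  ultimately show ?thesis using that num by blast
qed

lemma slice_width_le_word_width: "S \<in> set W \<Longrightarrow> slice_width S \<le> word_width W"
  unfolding word_width_def by (rule Max_ge) auto

lemma slice_width_le_num_bound:
  assumes "is_slice S" "snum S ` (sIn S \<union> sOut S) \<subseteq> {1..q}"
  shows "slice_width S \<le> q"
proof -
  have "card (snum S ` sIn S) \<le> q" "card (snum S ` sOut S) \<le> q"
    using assms(2) by (auto intro: card_mono[of "{1..q}", simplified])
  then show ?thesis
    unfolding slice_width_def
    using card_image[OF slice_inj_on_num_in[OF assms(1)]] card_image[OF slice_inj_on_num_out[OF assms(1)]] by simp
qed

lemma normalized_slice_in_Sigma:
  assumes "unit_slice T" "normalized_slice T" "slice_width T \<le> c" "slice_width T \<le> q"
  shows "T \<in> Sigma c q"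
proof -
  have "snum T ` (sIn T \<union> sOut T) = {1..card (sIn T)} \<union> {1..card (sOut T)}"
    using assms(2) unfolding normalized_slice_def by (simp add: image_Un)
  then show ?thesis using assms unfolding Sigma_def slice_width_def by auto
qed

lemma sub_unit_decomps_nums:
  assumes W: "W \<in> sub_unit_decomps c U" and "normalized_word U" "word_width U = q" and S: "S \<in> set W"
  shows "snum S ` (sIn S \<union> sOut S) \<subseteq> {1..q}"
proof -
  have sub: "sub_unit_decomp W U" using W unfolding sub_unit_decomps_def by blast
  obtain i where i: "i < length W" "S = W!i" using S by (auto simp: in_set_conv_nth)
  then have iU: "i < length U" using sub_unit_decompD(2)[OF sub] by simp
  note ss = sub_sliceD[OF sub_unit_decompD(3)[OF sub iU]]
  have "U!i \<in> set U" using iU by simp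
  then have "normalized_slice (U!i)" "slice_width (U!i) \<le> q"
    using assms(2,3) slice_width_le_word_width unfolding normalized_word_def by blast+
  then have "snum (U!i) ` (sIn (U!i) \<union> sOut (U!i)) \<subseteq> {1..q}"
    unfolding normalized_slice_def slice_width_def by (simp add: image_Un)
  moreover have "snum S ` (sIn S \<union> sOut S) \<subseteq> snum (U!i) ` (sIn (U!i) \<union> sOut (U!i))"
    unfolding i(2) ss(5) using ss(6,8) by (intro image_mono Un_mono)
  ultimately show ?thesis by (rule order_trans[rotated])
qed

section \<open>The \<open>q\<close>-numbering expansion\<close>

definition sg_path :: "('n,'v,'e) slice_graph \<Rightarrow> 'n list \<Rightarrow> bool" where
  "sg_path SG ns \<longleftrightarrow> ns \<noteq> [] \<and> hd ns \<in> sgI SG \<and> last ns \<in> sgF SG \<and> set ns \<subseteq> sgV SG \<and>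
     (\<forall>j. Suc j < length ns \<longrightarrow> (ns!j, ns!Suc j) \<in> sgE SG)"

lemma slang_sg_path: "slang SG = {map (sgL SG) ns | ns. sg_path SG ns}"
  unfolding slang_def sg_path_def ..

lemma slang_unit_decomp:
  assumes sg: "is_slice_graph SG" and W: "W \<in> slang SG"
  shows "is_unit_decomp W"
proof -
  obtain ns where ns: "W = map (sgL SG) ns" "sg_path SG ns"
    using W unfolding slang_sg_path by blast
  have "\<forall>n\<in>sgV SG. unit_slice (sgL SG n)" "\<forall>n\<in>sgI SG. initial_slice (sgL SG n)"
    "\<forall>n\<in>sgF SG. final_slice (sgL SG n)" "\<forall>(n,m)\<in>sgE SG. gluable (sgL SG n) (sgL SG m)"
    using sg unfolding is_slice_graph_def by blast+
  then show ?thesis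
    using ns unfolding is_unit_decomp_def sg_path_def by (auto simp: hd_map last_map)
qed

lemma Nq_simps:
  "sgV (Nq q SG) = {(n,ins,outs). n \<in> sgV SG \<and> (ins,outs) \<in> qnumberings q (sgL SG n)}"
  "sgI (Nq q SG) = {a\<in>sgV (Nq q SG). fst a \<in> sgI SG}"
  "sgF (Nq q SG) = {a\<in>sgV (Nq q SG). fst a \<in> sgF SG}"
  "sgL (Nq q SG) (n,ins,outs) = renumber (sgL SG n) ins outs"
  "sgE (Nq q SG) = {(a,b). a \<in> sgV (Nq q SG) \<and> b \<in> sgV (Nq q SG) \<and> (fst a, fst b) \<in> sgE SG \<and>
     gluable (sgL (Nq q SG) a) (sgL (Nq q SG) b)}"
  unfolding Nq_def Let_def by simp_all

lemma sg_path_Nq: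
  "sg_path (Nq q SG) ns \<longleftrightarrow> sg_path SG (map fst ns) \<and>
     (\<forall>(n,ins,outs)\<in>set ns. (ins,outs) \<in> qnumberings q (sgL SG n)) \<and>
     (\<forall>j. Suc j < length ns \<longrightarrow> gluable (sgL (Nq q SG) (ns!j)) (sgL (Nq q SG) (ns!Suc j)))"
  (is "_ \<longleftrightarrow> _ \<and> ?num \<and> ?glue")
proof -
  have V: "set ns \<subseteq> sgV (Nq q SG) \<longleftrightarrow> set (map fst ns) \<subseteq> sgV SG \<and> ?num"
    unfolding Nq_simps(1) by auto
  have "sg_path (Nq q SG) ns \<longleftrightarrow> ns \<noteq> [] \<and> set ns \<subseteq> sgV (Nq q SG) \<and> fst (hd ns) \<in> sgI SG \<and>
      fst (last ns) \<in> sgF SG \<and> (\<forall>j. Suc j < length ns \<longrightarrow> (fst (ns!j), fst (ns!Suc j)) \<in> sgE SG) \<and> ?glue"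
  proof -
    have "hd ns \<in> set ns" "last ns \<in> set ns" if "ns \<noteq> []" using that by simp_all
    moreover have "ns!j \<in> set ns" "ns!Suc j \<in> set ns" if "Suc j < length ns" for j
      using that by simp_all
    ultimately show ?thesis unfolding sg_path_def Nq_simps(2,3,5) by blast
  qed
  then show ?thesis
    unfolding V sg_path_def by (auto simp: hd_map last_map)
qed

lemma slang_Nq:
  "W2 \<in> slang (Nq q SG) \<longleftrightarrow> (\<exists>W0 ins outs. W0 \<in> slang SG \<and> length W2 = length W0 \<and>
     (\<forall>i<length W0. (ins i, outs i) \<in> qnumberings q (W0!i) \<and> W2!i = renumber (W0!i) (ins i) (outs i)) \<and>
     (\<forall>i. Suc i < length W0 \<longrightarrow> gluable (W2!i) (W2!Suc i)))"
  (is "?L \<longleftrightarrow> ?R")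
proof
  assume ?L
  then obtain ns where ns: "W2 = map (sgL (Nq q SG)) ns" "sg_path (Nq q SG) ns"
    unfolding slang_sg_path by blast
  let ?W0 = "map (sgL SG) (map fst ns)"
  have "?W0 \<in> slang SG" using ns(2) unfolding slang_sg_path sg_path_Nq by blast
  moreover have "(fst (snd (ns!i)), snd (snd (ns!i))) \<in> qnumberings q (?W0!i) \<and>
      W2!i = renumber (?W0!i) (fst (snd (ns!i))) (snd (snd (ns!i)))" if i: "i < length ?W0" for i
  proof -
    obtain n ins outs where "ns!i = (n,ins,outs)" by (cases "ns!i") blast
    moreover have "ns!i \<in> set ns" using i by simp
    ultimately show ?thesis using i ns unfolding sg_path_Nq by (auto simp: Nq_simps(4))
  qed
  moreover have "\<forall>i. Suc i < length ?W0 \<longrightarrow> gluable (W2!i) (W2!Suc i)"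
    using ns unfolding sg_path_Nq by simp
  ultimately show ?R using ns(1)
    by (intro exI[of _ ?W0] exI[of _ "\<lambda>i. fst (snd (ns!i))"] exI[of _ "\<lambda>i. snd (snd (ns!i))"]) simp
next
  assume ?R
  then obtain W0 ins outs where W0: "W0 \<in> slang SG" "length W2 = length W0"
    "\<forall>i<length W0. (ins i, outs i) \<in> qnumberings q (W0!i) \<and> W2!i = renumber (W0!i) (ins i) (outs i)"
    "\<forall>i. Suc i < length W0 \<longrightarrow> gluable (W2!i) (W2!Suc i)"
    by blast
  obtain ns where ns: "W0 = map (sgL SG) ns" "sg_path SG ns" using W0(1) unfolding slang_sg_path by blast
  define ns2 where "ns2 = map (\<lambda>i. (ns!i, ins i, outs i)) [0..<length ns]"
  have W2: "W2 = map (sgL (Nq q SG)) ns2"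
    using W0(2,3) ns(1) unfolding ns2_def by (intro nth_equalityI) (simp_all add: Nq_simps(4))
  have "map fst ns2 = ns" unfolding ns2_def by (intro nth_equalityI) simp_all
  moreover have "\<forall>(n,ins,outs)\<in>set ns2. (ins,outs) \<in> qnumberings q (sgL SG n)"
  proof
    fix x assume "x \<in> set ns2"
    then obtain i where "i < length ns" "x = (ns!i, ins i, outs i)" unfolding ns2_def by auto
    then show "case x of (n,ins,outs) \<Rightarrow> (ins,outs) \<in> qnumberings q (sgL SG n)"
      using W0(3) ns(1) by simp
  qed
  moreover have "gluable (sgL (Nq q SG) (ns2!j)) (sgL (Nq q SG) (ns2!Suc j))" if "Suc j < length ns2" for j
  proof -
    have "sgL (Nq q SG) (ns2!j) = W2!j" "sgL (Nq q SG) (ns2!Suc j) = W2!Suc j"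
      using that unfolding W2 by simp_all
    then show ?thesis using W0(4) that ns(1) by (simp add: ns2_def)
  qed
  ultimately have "sg_path (Nq q SG) ns2" using ns(2) unfolding sg_path_Nq by simp
  then show ?L using W2 unfolding slang_sg_path by blast
qed

lemma renumber_num_in: "v \<in> sIn S \<Longrightarrow> snum (renumber S a b) v = a ! (snum S v - 1)"
  unfolding renumber_def by simp

lemma renumber_num_out: "is_slice S \<Longrightarrow> v \<in> sOut S \<Longrightarrow> snum (renumber S a b) v = b ! (snum S v - 1)"
  unfolding renumber_def using slice_in_out_disjoint by fastforce

lemma image_nth_pred: "(\<lambda>k. xs ! (k - 1)) ` {1..length xs} = set xs"
  unfolding image_Suc_lessThan[symmetric] image_image by (auto simp: set_conv_nth)

lemma renumber_frontier_nums:
  assumes "is_slice S" "normalized_slice S" "length a = card (sIn S)" "length b = card (sOut S)"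
  shows "snum (renumber S a b) ` sIn S = set a" "snum (renumber S a b) ` sOut S = set b"
proof -
  have "snum (renumber S a b) ` sIn S = (\<lambda>k. a ! (k - 1)) ` snum S ` sIn S"
    unfolding image_image by (simp add: renumber_num_in)
  then show "snum (renumber S a b) ` sIn S = set a"
    using assms(2) image_nth_pred[of a, unfolded assms(3)] unfolding normalized_slice_def by simp
  have "snum (renumber S a b) ` sOut S = (\<lambda>k. b ! (k - 1)) ` snum S ` sOut S"
    unfolding image_image by (simp add: renumber_num_out[OF assms(1)])
  then show "snum (renumber S a b) ` sOut S = set b"
    using assms(2) image_nth_pred[of b, unfolded assms(4)] unfolding normalized_slice_def by simp
qed

text \<open>A \<open>q\<close>-numbering is strictly increasing, so gluability of the renumbered slices forces
  the two numberings at the glued frontier to coincide, and equal new numbers come from equal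
  old ones.\<close>

lemma gluable_renumber_num_eq:
  assumes "is_slice S" "is_slice T" "normalized_slice S" "normalized_slice T"
    and qS: "(ins, outs) \<in> qnumberings q S" and qT: "(ins', outs') \<in> qnumberings q T"
    and gl: "gluable (renumber S ins outs) (renumber T ins' outs')"
    and x: "x \<in> sOut S" and y: "y \<in> sIn T"
    and eq: "snum (renumber S ins outs) x = snum (renumber T ins' outs') y"
  shows "snum S x = snum T y"
proof -
  have lo: "length outs = card (sOut S)" "sorted_wrt (<) outs" and li: "length ins' = card (sIn T)" "sorted_wrt (<) ins'"
    and "length ins = card (sIn S)" "length outs' = card (sOut T)"
    using qS qT unfolding qnumberings_def by auto
  then have "set outs = set ins'"
    using gluable_nums[OF gl] renumber_frontier_nums[OF assms(1,3)] renumber_frontier_nums[OF assms(2,4)] by simp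
  then have outs: "outs = ins'" using strict_sorted_equal[OF li(2) lo(2)] by simp
  have "snum S x \<in> {1..length outs}" "snum T y \<in> {1..length outs}"
    using x y assms(3,4) lo(1) li(1) outs unfolding normalized_slice_def by auto
  moreover have "outs ! (snum S x - 1) = outs ! (snum T y - 1)"
    using eq renumber_num_out[OF assms(1) x] renumber_num_in[OF y] outs by simp
  ultimately show ?thesis
    using nth_eq_iff_index_eq[OF strict_sorted_iff[THEN iffD1, OF lo(2), THEN conjunct2]] by fastforce
qed

lemma gluable_slice_iso:
  assumes "gluable S T" "is_slice S" "is_slice T" "slice_iso S S'" "slice_iso T T'"
  shows "gluable S' T'"
proof -
  obtain f g f' g' where "slice_struct_iso f g S S'" "\<forall>v\<in>sIn S \<union> sOut S. snum S' (f v) = snum S v"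
    "slice_struct_iso f' g' T T'" "\<forall>v\<in>sIn T \<union> sOut T. snum T' (f' v) = snum T v"
    using assms(4,5) unfolding slice_iso_iff_struct_iso by blast
  then show ?thesis
    using gluable_struct_iso[OF assms(1-3), of f g S' f' g' T' id] by simp
qed

lemma word_iso_renumber_struct_iso:
  assumes wi: "word_iso W W2" and len: "length W2 = length W0"
    and sl: "\<And>i. i < length W0 \<Longrightarrow> is_slice (W0!i)" and nm: "\<And>i. i < length W0 \<Longrightarrow> normalized_slice (W0!i)"
    and qn: "\<And>i. i < length W0 \<Longrightarrow> (ins i, outs i) \<in> qnumberings q (W0!i)"
    and W2: "\<And>i. i < length W0 \<Longrightarrow> W2!i = renumber (W0!i) (ins i) (outs i)"
    and glue: "\<And>i. Suc i < length W0 \<Longrightarrow> gluable (W2!i) (W2!Suc i)"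
  obtains F G where "word_struct_iso F G W W0"
proof -
  have lenW: "length W = length W0" using wi len unfolding word_iso_def by simp
  have "\<forall>i. \<exists>fg. i < length W \<longrightarrow> slice_struct_iso (fst fg) (snd fg) (W!i) (W2!i) \<and>
      (\<forall>v\<in>sIn (W!i) \<union> sOut (W!i). snum (W2!i) (fst fg v) = snum (W!i) v)"
    using wi unfolding word_iso_def slice_iso_iff_struct_iso by fastforce
  then obtain FG where FG: "\<And>i. i < length W \<Longrightarrow> slice_struct_iso (fst (FG i)) (snd (FG i)) (W!i) (W2!i) \<and>
      (\<forall>v\<in>sIn (W!i) \<union> sOut (W!i). snum (W2!i) (fst (FG i) v) = snum (W!i) v)"
    by metis
  let ?F = "\<lambda>i. fst (FG i)" and ?G = "\<lambda>i. snd (FG i)"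
  have "snum (W0!i) (?F i x) = snum (W0!Suc i) (?F (Suc i) y)"
    if i: "Suc i < length W" and x: "x \<in> sOut (W!i)" and y: "y \<in> sIn (W!Suc i)"
      and eq: "snum (W!i) x = snum (W!Suc i) y" for i x y
  proof -
    have i0: "i < length W0" "Suc i < length W0" using i lenW by simp_all
    note a = FG[OF Suc_lessD[OF i]] and b = FG[OF i]
    have fx: "?F i x \<in> sOut (W0!i)" using slice_struct_iso_out[OF conjunct1[OF a]] x W2[OF i0(1)] by auto
    have fy: "?F (Suc i) y \<in> sIn (W0!Suc i)" using slice_struct_iso_in[OF conjunct1[OF b]] y W2[OF i0(2)] by auto
    have "snum (W2!i) (?F i x) = snum (W2!Suc i) (?F (Suc i) y)" using a b x y eq by simp
    then show ?thesis
      using gluable_renumber_num_eq[OF sl[OF i0(1)] sl[OF i0(2)] nm[OF i0(1)] nm[OF i0(2)]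
          qn[OF i0(1)] qn[OF i0(2)] _ fx fy] glue[OF i0(2)] W2[OF i0(1)] W2[OF i0(2)] by simp
  qed
  then have "word_struct_iso ?F ?G W W0"
    unfolding word_struct_iso_def using FG W2 lenW by simp
  then show ?thesis using that by blast
qed

lemma normalized_dilated_saturatedD:
  assumes "normalized_dilated_saturated z c q SG"
  shows "is_slice_graph SG" "normalized_slice_graph SG"
  using assms unfolding normalized_dilated_saturated_def slice_graph_over_def by simp_all

lemma graph_lang_of_slang_Nq:
  assumes "is_slice_graph SG" "normalized_slice_graph SG" "is_unit_decomp W"
    and "W2 \<in> slang (Nq q SG)" and "word_iso W W2"
  shows "\<exists>H\<in>graph_lang SG. digraph_iso (compose W) H"
proof -
  obtain W0 ins outs where W0: "W0 \<in> slang SG" "length W2 = length W0"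
    "\<And>i. i < length W0 \<Longrightarrow> (ins i, outs i) \<in> qnumberings q (W0!i) \<and> W2!i = renumber (W0!i) (ins i) (outs i)"
    "\<And>i. Suc i < length W0 \<Longrightarrow> gluable (W2!i) (W2!Suc i)"
    using assms(4) unfolding slang_Nq by blast
  note ud0 = slang_unit_decomp[OF assms(1) W0(1)]
  have "normalized_slice (W0!i)" if "i < length W0" for i
    using assms(2) W0(1) that unfolding normalized_slice_graph_def slang_sg_path sg_path_def
    by (auto simp: subset_iff)
  then obtain F G where "word_struct_iso F G W W0"
    using word_iso_renumber_struct_iso[OF assms(5) W0(2) unit_decomp_slice[OF ud0] _ _ _ W0(4)] W0(3)
    by blast
  then have "digraph_iso (compose W) (compose W0)"
    unfolding digraph_iso_def using compose_word_struct_iso(1)[OF assms(3) ud0] by blast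
  then show ?thesis using W0(1) unfolding graph_lang_def by blast
qed

lemma saturated_word_iso:
  fixes W0 :: "(nat,nat) slice list"
  assumes sat: "normalized_dilated_saturated z c q SG" and H: "H \<in> graph_lang SG"
    and iso: "digraph_iso (compose W) H" and ud: "is_unit_decomp W"
    and zt: "z_topological z (compose W) (centers W)"
    and ud0: "is_unit_decomp W0" and W0: "set W0 \<subseteq> Sigma c q" "normalized_word W0"
    and wsi: "word_struct_iso F G W W0"
  shows "\<exists>W'\<in>slang SG. word_iso W0 W'"
proof -
  obtain f g where fg: "digraph_iso_via f g (compose W) H" using iso unfolding digraph_iso_def by blast
  let ?\<Psi> = "\<lambda>(i,v). (i, F i v)"
  note ps = compose_word_struct_iso[OF ud ud0 wsi] and dg = compose_digraph[OF ud]
  have inj: "inj_on ?\<Psi> (dV (compose W))" using digraph_iso_viaD(1)[OF ps(1)] unfolding bij_betw_def ..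
  have left_inv: "f (inv_into (dV (compose W)) ?\<Psi> (?\<Psi> x)) = f x" if "x \<in> set (centers W)" for x
  proof -
    have "x \<in> dV (compose W)" using set_centers_subset[OF ud] that ..
    then show ?thesis by (rule arg_cong[where f=f, OF inv_into_f_f[OF inj]])
  qed
  have "map (f \<circ> inv_into (dV (compose W)) ?\<Psi>) (centers W0) = map f (centers W)"
    unfolding ps(2)[symmetric] map_map by (rule map_cong[OF refl]) (simp only: comp_apply left_inv)
  then have compat: "compatible W0 H (map f (centers W))"
    unfolding compatible_def
    by (intro exI conjI) (rule digraph_iso_via_comp[OF digraph_iso_via_inv[OF dg ps(1)] fg])
  have "\<forall>H\<in>graph_lang SG. \<forall>ord. z_topological z H ord \<longrightarrow>
      (\<forall>W :: (nat,nat) slice list. is_unit_decomp W \<and> set W \<subseteq> Sigma c q \<and> normalized_word W \<and>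
          compatible W H ord \<longrightarrow> (\<exists>W'\<in>slang SG. word_iso W W'))"
    using sat unfolding normalized_dilated_saturated_def by (elim conjE) assumption
  then show ?thesis
    using H z_topological_iso[OF dg fg zt] ud0 W0 compat by simp
qed

lemma slice_iso_renumber_original_nums:
  assumes sl: "is_slice S" "is_slice S'" and iso: "slice_struct_iso F G S S0" and si: "slice_iso S0 S'"
    and num: "\<And>v. v \<in> sVerts S \<Longrightarrow> snum S0 (F v) = normal_num S v"
  shows "slice_iso S (renumber S' (sorted_list_of_set (snum S ` sIn S)) (sorted_list_of_set (snum S ` sOut S)))"
    (is "slice_iso S ?S2")
proof -
  obtain f g where fg: "slice_struct_iso f g S0 S'" "\<forall>v\<in>sIn S0 \<union> sOut S0. snum S' (f v) = snum S0 v"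
    using si unfolding slice_iso_iff_struct_iso by blast
  have "snum ?S2 (f (F v)) = snum S v" if v: "v \<in> sIn S \<union> sOut S" for v
  proof -
    have vV: "v \<in> sVerts S" using v slice_parts_subset_verts[of S] by blast
    consider "v \<in> sIn S" | "v \<in> sOut S" using v by blast
    then show ?thesis
    proof cases
      case 1
      have F: "F v \<in> sIn S0" using slice_struct_iso_in[OF iso] 1 by blast
      then have "f (F v) \<in> sIn S'" using slice_struct_iso_in[OF fg(1)] by blast
      then have "snum ?S2 (f (F v)) = sorted_list_of_set (snum S ` sIn S) ! (snum S' (f (F v)) - 1)"
        by (rule renumber_num_in)
      also have "\<dots> = sorted_list_of_set (snum S ` sIn S) ! (normal_num S v - 1)"
        using fg(2) F num[OF vV] by simp
      finally show ?thesis using sorted_list_of_set_nth_normal_num(1)[OF sl(1) 1] by simp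
    next
      case 2
      have F: "F v \<in> sOut S0" using slice_struct_iso_out[OF iso] 2 by blast
      then have "f (F v) \<in> sOut S'" using slice_struct_iso_out[OF fg(1)] by blast
      then have "snum ?S2 (f (F v)) = sorted_list_of_set (snum S ` sOut S) ! (snum S' (f (F v)) - 1)"
        by (rule renumber_num_out[OF sl(2)])
      also have "\<dots> = sorted_list_of_set (snum S ` sOut S) ! (normal_num S v - 1)"
        using fg(2) F num[OF vV] by simp
      finally show ?thesis using sorted_list_of_set_nth_normal_num(2)[OF sl(1) 2] by simp
    qed
  qed
  then show ?thesis
    unfolding slice_iso_iff_struct_iso using slice_struct_iso_comp[OF iso fg(1)] by auto
qed

lemma sorted_frontier_nums_qnumbering:
  assumes "is_slice S" "snum S ` (sIn S \<union> sOut S) \<subseteq> {1..q}"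
    and "card (sIn T) = card (sIn S)" "card (sOut T) = card (sOut S)"
  shows "(sorted_list_of_set (snum S ` sIn S), sorted_list_of_set (snum S ` sOut S)) \<in> qnumberings q T"
  using assms card_image[OF slice_inj_on_num_in[OF assms(1)]] card_image[OF slice_inj_on_num_out[OF assms(1)]]
    finite_imageI[OF slice_finite_parts(1)[OF assms(1)], of "snum S"]
    finite_imageI[OF slice_finite_parts(3)[OF assms(1)], of "snum S"]
  unfolding qnumberings_def by (simp add: image_Un)

lemma slice_iso_card: "slice_iso S T \<Longrightarrow> card (sIn T) = card (sIn S) \<and> card (sOut T) = card (sOut S)"
  unfolding slice_iso_iff_struct_iso using slice_struct_iso_card(1,3) by blast

lemma renumbered_slang_Nq:
  assumes sg: "is_slice_graph SG" and ud: "is_unit_decomp W"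
    and nq: "\<forall>S\<in>set W. snum S ` (sIn S \<union> sOut S) \<subseteq> {1..q}"
    and W': "W' \<in> slang SG" and wi: "word_iso W0 W'" and wsi: "word_struct_iso F G W W0"
    and num: "\<And>i v. i < length W \<Longrightarrow> v \<in> sVerts (W!i) \<Longrightarrow> snum (W0!i) (F i v) = normal_num (W!i) v"
  shows "\<exists>W2\<in>slang (Nq q SG). word_iso W W2"
proof -
  define ins where "ins i = sorted_list_of_set (snum (W!i) ` sIn (W!i))" for i
  define outs where "outs i = sorted_list_of_set (snum (W!i) ` sOut (W!i))" for i
  define W2 where "W2 = map (\<lambda>i. renumber (W'!i) (ins i) (outs i)) [0..<length W]"
  note sl = unit_decomp_slice[OF ud] and sl' = unit_decomp_slice[OF slang_unit_decomp[OF sg W']]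
  have len: "length W' = length W" "length W2 = length W"
    using wi word_struct_iso_length[OF wsi] unfolding word_iso_def W2_def by simp_all
  have si: "slice_iso (W!i) (W2!i)" if i: "i < length W" for i
  proof -
    have "slice_iso (W0!i) (W'!i)" using wi i word_struct_iso_length[OF wsi] unfolding word_iso_def by simp
    then show ?thesis
      using slice_iso_renumber_original_nums[OF sl[OF i] sl'[of i] word_struct_iso_slice[OF wsi i]] num[OF i] i len
      unfolding W2_def ins_def outs_def by simp
  qed
  have "W2 \<in> slang (Nq q SG)"
    unfolding slang_Nq
  proof (intro exI conjI allI impI)
    show "W' \<in> slang SG" "length W2 = length W'" using W' len by simp_all
    fix i
    assume i: "i < length W'"
    then have iW: "i < length W" using len by simp
    show W2i: "W2!i = renumber (W'!i) (ins i) (outs i)" using iW unfolding W2_def by simp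
    have "card (sIn (W'!i)) = card (sIn (W!i))" "card (sOut (W'!i)) = card (sOut (W!i))"
      using slice_iso_card[OF si[OF iW]] W2i by simp_all
    then show "(ins i, outs i) \<in> qnumberings q (W'!i)"
      unfolding ins_def outs_def by (rule sorted_frontier_nums_qnumbering[OF sl[OF iW] bspec[OF nq nth_mem[OF iW]]])
  next
    fix i assume "Suc i < length W'"
    then show "gluable (W2!i) (W2!Suc i)"
      using gluable_slice_iso[OF unit_decomp_gluable[OF ud] sl sl si si] len by simp
  qed
  moreover have "word_iso W W2" unfolding word_iso_def using len si by simp
  ultimately show ?thesis by blast
qed

lemma sub_unit_decomp_word_iso_Nq:
  assumes udU: "is_unit_decomp U" and normU: "normalized_word U" and wq: "word_width U = q"
    and ztU: "z_topological z (compose U) (centers U)"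
    and sat: "normalized_dilated_saturated z c q SG"
    and W: "W \<in> sub_unit_decomps c U" and H: "H \<in> graph_lang SG" and iso: "digraph_iso (compose W) H"
  shows "\<exists>W2\<in>slang (Nq q SG). word_iso W W2"
proof -
  have sub: "sub_unit_decomp W U" and wc: "word_width W \<le> c" using W unfolding sub_unit_decomps_def by blast+
  note udW = sub_unit_decompD(1)[OF sub]
  have nq: "\<forall>S\<in>set W. snum S ` (sIn S \<union> sOut S) \<subseteq> {1..q}"
    using sub_unit_decomps_nums[OF W normU wq] by blast
  obtain W0 :: "(nat,nat) slice list" and F G where W0: "is_unit_decomp W0" "normalized_word W0"
    "word_struct_iso F G W W0"
    and num: "\<And>i v. i < length W \<Longrightarrow> v \<in> sVerts (W!i) \<Longrightarrow> snum (W0!i) (F i v) = normal_num (W!i) v"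
    by (rule normal_copy_unit_decomp[OF udW]) (rule that)
  have "W0!i \<in> Sigma c q" if i: "i < length W0" for i
  proof -
    have iW: "i < length W" using i word_struct_iso_length[OF W0(3)] by simp
    then have Wi: "W!i \<in> set W" by simp
    have "slice_width (W0!i) = slice_width (W!i)"
      using slice_struct_iso_width[OF word_struct_iso_slice[OF W0(3) iW]] .
    moreover have "slice_width (W!i) \<le> c" using slice_width_le_word_width[OF Wi] wc by simp
    moreover have "slice_width (W!i) \<le> q"
      using slice_width_le_num_bound[OF unit_decomp_slice[OF udW iW] bspec[OF nq Wi]] .
    moreover have "normalized_slice (W0!i)" using W0(2) i unfolding normalized_word_def by simp
    ultimately show ?thesis
      using normalized_slice_in_Sigma[OF unit_decomp_unit_slice[OF W0(1) i]] by simp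
  qed
  then have "set W0 \<subseteq> Sigma c q" by (auto simp: in_set_conv_nth)
  then obtain W' where "W' \<in> slang SG" "word_iso W0 W'"
    using saturated_word_iso[OF sat H iso udW z_topological_sub_unit_decomp[OF sub udU ztU] W0(1) _ W0(2,3)]
    by blast
  then show ?thesis
    using renumbered_slang_Nq[OF normalized_dilated_saturatedD(1)[OF sat] udW nq _ _ W0(3) num] by blast
qed

theorem theorem5:
  fixes G :: "('a,'b) digraph"
    and U :: "('v,'e) slice list"
    and SG :: "('n,'v2,'e2) slice_graph"
    and SUB :: "('m,'v,'e) slice_graph"
    and z c q :: nat
  assumes "is_digraph G"
    and "is_unit_decomp_of U G"
    and "normalized_word U"
    and "word_width U = q"
    and "zigzag_le z U"
    and "normalized_dilated_saturated z c q SG"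
    and "is_slice_graph SUB"
    and "slang SUB = sub_unit_decomps c U"
  shows "{W \<in> sub_unit_decomps c U. \<exists>H\<in>graph_lang SG. digraph_iso (compose W) H}
         = {W \<in> slang SUB. \<exists>W'\<in>slang (Nq q SG). word_iso W W'}"
proof -
  \<comment> \<open>\<open>G\<close> and \<open>SUB\<close> enter only through \<open>U\<close> and the language of \<open>SUB\<close>.\<close>
  have udU: "is_unit_decomp U" using assms(2) unfolding is_unit_decomp_of_def by blast
  note ztU = zigzag_le_centers[OF udU assms(5)]
  note sg = normalized_dilated_saturatedD[OF assms(6)]
  show ?thesis
  proof (intro equalityI subsetI)
    fix W assume "W \<in> {W \<in> sub_unit_decomps c U. \<exists>H\<in>graph_lang SG. digraph_iso (compose W) H}"
    then obtain H where W: "W \<in> sub_unit_decomps c U" "H \<in> graph_lang SG" "digraph_iso (compose W) H"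
      by blast
    then show "W \<in> {W \<in> slang SUB. \<exists>W'\<in>slang (Nq q SG). word_iso W W'}"
      using sub_unit_decomp_word_iso_Nq[OF udU assms(3,4) ztU assms(6) W] assms(8) by simp
  next
    fix W assume "W \<in> {W \<in> slang SUB. \<exists>W'\<in>slang (Nq q SG). word_iso W W'}"
    then obtain W2 where W: "W \<in> sub_unit_decomps c U" "W2 \<in> slang (Nq q SG)" "word_iso W W2"
      using assms(8) by blast
    then have "is_unit_decomp W" unfolding sub_unit_decomps_def sub_unit_decomp_def by blast
    with W show "W \<in> {W \<in> sub_unit_decomps c U. \<exists>H\<in>graph_lang SG. digraph_iso (compose W) H}"
      using graph_lang_of_slang_Nq[OF sg] by simp
  qed
qed

end
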